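(* Fix $w\in S_n$ and $1\le i\le n-1$. Let $p\in H^*_T(X_w)$ have expansion $p=\sum_{v\le w}c_v[\Omega_v]_{X_w}$ with $c_v\in\mathbb{C}[t_1,\ldots,t_n]$. Then $$D_i(p)=\sum_{v\le w}\partial_i(c_v)[\Omega_v]_{X_w}+\sum_{v\le w:\ s_{i,i+1}v<v}s_{i,i+1}(c_v)[\Omega_{s_{i,i+1}v}]_{X_w}.$$ In particular $D_i(p)\in H^*_T(X_w)$.
   Context: Let $G=GL_n(\mathbb{C})$, $B$ (resp. $B^-$) the invertible upper- (resp. lower-) triangular matrices, and $T$ the diagonal torus. Permutations are identified with permutation matrices via $we_i=e_{w(i)}$, and $s_{jk}$ is the transposition of $j,k$. $X_w=\overline{BwB/B}$, and the Bruhat order is $v\le w$ iff $[v]\in X_w$. $\mathrm{Inv}(v)=\{t_a-t_b:a<b,\ v^{-1}(a)>v^{-1}(b)\}$ and $\ell(v)=|\mathrm{Inv}(v)|$. In GKM form, $H^*_T(X_w)$ is the ring of tuples $(p_u)_{u\le w}$ of polynomials in $\mathbb{C}[t_1,\ldots,t_n]$ with $p_u-p_{s_{jk}u}\in\langle t_j-t_k\rangle$ whenever $j<k$ and $u,s_{jk}u\le w$; $H^*_T(G/B)$ is the case of the longest permutation. $S_n$ acts on polynomials by $(u\cdot f)(t_1,\ldots,t_n)=f(t_{u(1)},\ldots,t_{u(n)})$, on $H^*_T(G/B)$ by $(u\cdot p)_v=u\cdot p_{u^{-1}v}$, and on $H^*_T(X_w)$ by $s\cdot\iota(p)=\iota(s\cdot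 p)$, where $\iota((p_u)_{u\in S_n})=(p_u)_{u\le w}$. The Schubert class $[\Omega_v]=(p^v_u)_u\in H^*_T(G/B)$ is the equivariant class of $\overline{B^-vB/B}$; equivalently, it is the unique class with $p^v_u=0$ unless $u\ge v$, each nonzero $p^v_u$ homogeneous of degree $\ell(v)$, and $p^v_v=\prod_{\beta\in\mathrm{Inv}(v)}\beta$. Set $[\Omega_v]_{X_w}=\iota([\Omega_v])$; these form a $\mathbb{C}[t_1,\ldots,t_n]$-basis of $H^*_T(X_w)$. The left divided difference operator is $D_i(p)=\dfrac{p-s_{i,i+1}\cdot p}{t_i-t_{i+1}}$ (computed componentwise), and $\partial_i(f)=\dfrac{f-s_{i,i+1}\cdot f}{t_i-t_{i+1}}$ for $f\in\mathbb{C}[t_1,\ldots,t_n]$.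
   Formalization: $D_i(p)$ means $\iota$ applied to $D_i$ of the class $\sum_{v\le w}c_v[\Omega_v]$ in $H^*_T(G/B)$ rather than through the action $s\cdot\iota(p)=\iota(s\cdot p)$ on $H^*_T(X_w)$; each division by $t_i-t_{i+1}$ at $u\le w$ is also asserted exact. Apart from conventions, each condition added here is assumed in the paper as well or is needed for the statement above to hold. *)

theory Defs
  imports Complex_Main "HOL-Library.Poly_Mapping" "HOL-Combinatorics.Transposition" "HOL-Combinatorics.Permutations"
begin

text \<open>Polynomials in the variables t_i (i a natural number), complex coefficients:
  a polynomial is a finitely supported map from monomials (exponent vectors) to coefficients.\<close>
type_synonym cpoly = "(nat \<Rightarrow>\<^sub>0 nat) \<Rightarrow>\<^sub>0 complex"

definition var :: "nat \<Rightarrow> cpoly" where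
  "var i = Poly_Mapping.single (Poly_Mapping.single i 1) 1"

definition polys :: "nat \<Rightarrow> cpoly set" where
  "polys n = {f. \<forall>m \<in> Poly_Mapping.keys f. Poly_Mapping.keys m \<subseteq> {1..n}}"

definition mdeg :: "(nat \<Rightarrow>\<^sub>0 nat) \<Rightarrow> nat" where
  "mdeg m = (\<Sum>x\<in>Poly_Mapping.keys m. Poly_Mapping.lookup m x)"

definition homogeneous :: "nat \<Rightarrow> cpoly \<Rightarrow> bool" where
  "homogeneous d f \<longleftrightarrow> (\<forall>m \<in> Poly_Mapping.keys f. mdeg m = d)"

definition Sn :: "nat \<Rightarrow> (nat \<Rightarrow> nat) set" where
  "Sn n = {u. u permutes {1..n}}"

text \<open>(u . f)(t_1,...,t_n) = f(t_{u(1)},...,t_{u(n)}): the variable t_i is replaced by t_{u(i)};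
  hence the coefficient of a monomial m in u . f is the coefficient of m o u in f.\<close>
definition perm_poly :: "(nat \<Rightarrow> nat) \<Rightarrow> cpoly \<Rightarrow> cpoly" where
  "perm_poly u f = Abs_poly_mapping (\<lambda>m. Poly_Mapping.lookup f (Poly_Mapping.map_key u m))"

definition Inv :: "nat \<Rightarrow> (nat \<Rightarrow> nat) \<Rightarrow> cpoly set" where
  "Inv n v = {var a - var b | a b. 1 \<le> a \<and> a < b \<and> b \<le> n \<and> inv v a > inv v b}"

definition len :: "nat \<Rightarrow> (nat \<Rightarrow> nat) \<Rightarrow> nat" where
  "len n v = card (Inv n v)"

text \<open>Bruhat order (Chevalley's combinatorial description): the reflexive transitive closure of
  u < t u for transpositions t with len u < len (t u).\<close>
definition bruhat_step :: "nat \<Rightarrow> (nat \<Rightarrow> nat) \<Rightarrow> (nat \<Rightarrow> nat) \<Rightarrow> bool" where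
  "bruhat_step n u u' \<longleftrightarrow>
     (\<exists>j k. 1 \<le> j \<and> j < k \<and> k \<le> n \<and> u' = transpose j k \<circ> u \<and> len n u < len n u')"

definition bruhat_le :: "nat \<Rightarrow> (nat \<Rightarrow> nat) \<Rightarrow> (nat \<Rightarrow> nat) \<Rightarrow> bool" where
  "bruhat_le n v w \<longleftrightarrow> v \<in> Sn n \<and> w \<in> Sn n \<and> (bruhat_step n)\<^sup>*\<^sup>* v w"

definition bruhat_lt :: "nat \<Rightarrow> (nat \<Rightarrow> nat) \<Rightarrow> (nat \<Rightarrow> nat) \<Rightarrow> bool" where
  "bruhat_lt n v w \<longleftrightarrow> bruhat_le n v w \<and> v \<noteq> w"

text \<open>GKM ring on an index set U of permutations: tuples (p_u)_{u in U}, encoded as functions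
  vanishing outside U, with values in C[t_1..t_n] and the GKM divisibility conditions.\<close>
definition gkm_on :: "nat \<Rightarrow> (nat \<Rightarrow> nat) set \<Rightarrow> ((nat \<Rightarrow> nat) \<Rightarrow> cpoly) set" where
  "gkm_on n U = {p. (\<forall>u. u \<notin> U \<longrightarrow> p u = 0) \<and> (\<forall>u\<in>U. p u \<in> polys n) \<and>
     (\<forall>u j k. u \<in> U \<and> 1 \<le> j \<and> j < k \<and> k \<le> n \<and> transpose j k \<circ> u \<in> U \<longrightarrow>
        (var j - var k) dvd (p u - p (transpose j k \<circ> u)))}"

definition HX :: "nat \<Rightarrow> (nat \<Rightarrow> nat) \<Rightarrow> ((nat \<Rightarrow> nat) \<Rightarrow> cpoly) set" where
  "HX n w = gkm_on n {u. bruhat_le n u w}"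

definition HGB :: "nat \<Rightarrow> ((nat \<Rightarrow> nat) \<Rightarrow> cpoly) set" where
  "HGB n = gkm_on n (Sn n)"

definition iota :: "nat \<Rightarrow> (nat \<Rightarrow> nat) \<Rightarrow> ((nat \<Rightarrow> nat) \<Rightarrow> cpoly) \<Rightarrow> ((nat \<Rightarrow> nat) \<Rightarrow> cpoly)" where
  "iota n w p = (\<lambda>u. if bruhat_le n u w then p u else 0)"

definition schubert :: "nat \<Rightarrow> (nat \<Rightarrow> nat) \<Rightarrow> ((nat \<Rightarrow> nat) \<Rightarrow> cpoly)" where
  "schubert n v = (THE p. p \<in> HGB n \<and>
      (\<forall>u. \<not> bruhat_le n v u \<longrightarrow> p u = 0) \<and>
      (\<forall>u. p u \<noteq> 0 \<longrightarrow> homogeneous (len n v) (p u)) \<and>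
      p v = (\<Prod>\<beta>\<in>Inv n v. \<beta>))"

definition schubertX :: "nat \<Rightarrow> (nat \<Rightarrow> nat) \<Rightarrow> (nat \<Rightarrow> nat) \<Rightarrow> ((nat \<Rightarrow> nat) \<Rightarrow> cpoly)" where
  "schubertX n w v = iota n w (schubert n v)"

definition act :: "(nat \<Rightarrow> nat) \<Rightarrow> ((nat \<Rightarrow> nat) \<Rightarrow> cpoly) \<Rightarrow> ((nat \<Rightarrow> nat) \<Rightarrow> cpoly)" where
  "act u p = (\<lambda>v. perm_poly u (p (inv u \<circ> v)))"

definition divq :: "nat \<Rightarrow> cpoly \<Rightarrow> cpoly" where
  "divq i g = (THE r. (var i - var (Suc i)) * r = g)"

definition sref :: "nat \<Rightarrow> nat \<Rightarrow> nat" where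
  "sref i = transpose i (Suc i)"

definition dd :: "nat \<Rightarrow> cpoly \<Rightarrow> cpoly" where
  "dd i f = divq i (f - perm_poly (sref i) f)"

definition Dop :: "nat \<Rightarrow> ((nat \<Rightarrow> nat) \<Rightarrow> cpoly) \<Rightarrow> ((nat \<Rightarrow> nat) \<Rightarrow> cpoly)" where
  "Dop i p = (\<lambda>v. divq i (p v - act (sref i) p v))"

end

theory Submission
  imports Defs
begin

text \<open>
  \<open>D\<^sub>i\<close> maps GKM classes on \<open>G/B\<close> to GKM classes: the numerator \<open>p\<^sub>u - s\<^sub>i\<cdot>p\<^bsub>s\<^sub>iu\<^esub>\<close> is divisible
  by \<open>t\<^sub>i - t\<^bsub>i+1\<^esub>\<close> because of the GKM condition on the edge \<open>u \<longleftrightarrow> s\<^sub>iu\<close> and because \<open>f - s\<^sub>i\<cdot>f\<close> always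
  is, and the GKM conditions for \<open>D\<^sub>i p\<close> are those for \<open>p\<close> on edges conjugated by \<open>s\<^sub>i\<close>. Moreover
  \<open>D\<^sub>i(c p) = \<partial>\<^sub>i(c) p + s\<^sub>i(c) D\<^sub>i(p)\<close>, so by linearity the formula reduces to
  \<open>D\<^sub>i[\<Omega>\<^sub>v] = [\<Omega>\<^bsub>s\<^sub>iv\<^esub>]\<close> if \<open>s\<^sub>iv < v\<close> and \<open>D\<^sub>i[\<Omega>\<^sub>v] = 0\<close> otherwise, and restricting to \<open>X\<^sub>w\<close>
  commutes with everything.

  Both cases follow from the uniqueness of Schubert classes, which holds because a GKM class
  that at every \<open>u\<close> is zero or homogeneous of degree \<open>< \<ell>(u)\<close> vanishes. \<open>D\<^sub>i[\<Omega>\<^sub>v]\<close> lowers the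
  degree by one, and it is supported on \<open>{u \<ge> s\<^sub>iv}\<close> by the lifting property of the Bruhat order,
  which comes from the monotonicity of \<open>z \<mapsto> min(z, s\<^sub>iz)\<close>. Since Schubert classes are defined by
  a description, their existence is proved as well: starting from the point class of the longest
  permutation, apply the \<open>D\<^sub>i\<close>.
\<close>

section \<open>Polynomial algebra\<close>

abbreviation lookup :: "('a \<Rightarrow>\<^sub>0 'b::zero) \<Rightarrow> 'a \<Rightarrow> 'b" where
  "lookup \<equiv> Poly_Mapping.lookup"

abbreviation keys :: "('a \<Rightarrow>\<^sub>0 'b::zero) \<Rightarrow> 'a set" where
  "keys \<equiv> Poly_Mapping.keys"

abbreviation single :: "'a \<Rightarrow> 'b::zero \<Rightarrow> 'a \<Rightarrow>\<^sub>0 'b" where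
  "single \<equiv> Poly_Mapping.single"

abbreviation const :: "complex \<Rightarrow> cpoly" where
  "const c \<equiv> single 0 c"

lemma poly_mapping_sum_single: "(p :: 'a \<Rightarrow>\<^sub>0 'b::comm_monoid_add) = (\<Sum>x\<in>keys p. single x (lookup p x))"
proof (rule poly_mapping_eqI)
  fix k
  have "lookup (\<Sum>x\<in>keys p. single x (lookup p x)) k = (\<Sum>x\<in>keys p. if x = k then lookup p x else 0)"
    by (simp add: lookup_sum lookup_single when_def)
  also have "\<dots> = lookup p k"
    by (simp add: in_keys_iff)
  finally show "lookup p k = lookup (\<Sum>x\<in>keys p. single x (lookup p x)) k"
    by simp
qed

lemma const_mult: "const (a * b) = const a * const b"
  by (simp add: mult_single)

lemma single_eq_const_mult: "single m c = const c * single m 1"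
  by (simp add: mult_single)

lemma keys_add_nat: "keys (a + b :: 'a \<Rightarrow>\<^sub>0 nat) = keys a \<union> keys b"
  by (auto simp: in_keys_iff lookup_add)

lemma var_power: "var j ^ k = single (single j k) 1"
  by (induction k) (simp_all add: var_def mult_single single_add[symmetric] mult.commute)

lemma monomial_eq_prod_var_power: "single m 1 = (\<Prod>x\<in>keys m. var x ^ lookup m x)"
proof -
  have "(\<Prod>x\<in>S. var x ^ k x) = single (\<Sum>x\<in>S. single x (k x)) 1" if "finite S" for S k
    using that by (induction S rule: finite_induct) (simp_all add: var_power mult_single add.commute)
  then show ?thesis
    by (simp add: poly_mapping_sum_single[of m, symmetric])
qed

lemma lookup_var_single: "lookup (var x) (single y (Suc 0)) = (if x = y then 1 else 0)"
proof -
  have "single y (Suc 0) = single x (Suc 0) \<Longrightarrow> x = y"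
    by (metis lookup_single_eq lookup_single_not_eq nat.distinct(1))
  then show ?thesis
    by (auto simp: var_def lookup_single when_def)
qed

lemma var_eq_iff: "var a = var b \<longleftrightarrow> a = b"
  by (metis lookup_var_single one_neq_zero)

lemma var_diff_eq_iff:
  assumes "a \<noteq> b" "c \<noteq> d"
  shows "var a - var b = var c - var d \<longleftrightarrow> a = c \<and> b = d"
proof
  assume eq: "var a - var b = var c - var d"
  have "lookup (var a - var b) (single x (Suc 0)) = lookup (var c - var d) (single x (Suc 0))" for x
    using eq by simp
  from this[of a] this[of b] show "a = c \<and> b = d"
    using assms by (simp add: lookup_minus lookup_var_single split: if_splits)
qed simp

lemma var_diff_nonzero: "a \<noteq> b \<Longrightarrow> var a - var b \<noteq> 0"
  using var_eq_iff by simp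

locale cpoly_hom =
  fixes F :: "cpoly \<Rightarrow> cpoly"
  assumes hom_add: "F (f + g) = F f + F g"
    and hom_mult: "F (f * g) = F f * F g"
    and hom_const: "F (const c) = const c"
begin

lemma hom_zero: "F 0 = 0"
  using hom_const[of 0] by simp

lemma hom_one: "F 1 = 1"
  using hom_const[of 1] by simp

lemma hom_uminus: "F (- f) = - F f"
  by (metis add.inverse_unique add.right_inverse hom_add hom_zero)

lemma hom_diff: "F (f - g) = F f - F g"
  using hom_add[of f "- g"] hom_uminus[of g] by simp

lemma hom_sum: "F (\<Sum>x\<in>A. G x) = (\<Sum>x\<in>A. F (G x))"
  by (induction A rule: infinite_finite_induct) (simp_all add: hom_add hom_zero)

lemma hom_prod: "F (\<Prod>x\<in>A. G x) = (\<Prod>x\<in>A. F (G x))"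
  by (induction A rule: infinite_finite_induct) (simp_all add: hom_mult hom_one)

lemma hom_dvd: "a dvd b \<Longrightarrow> F a dvd F b"
  by (metis dvd_def hom_mult)

end

lemma cpoly_hom_comp: "cpoly_hom F \<Longrightarrow> cpoly_hom G \<Longrightarrow> cpoly_hom (F \<circ> G)"
  by (simp add: cpoly_hom_def)

lemma cpoly_induct [case_names add mult const var]:
  assumes add: "\<And>f g. P f \<Longrightarrow> P g \<Longrightarrow> P (f + g)"
    and mult: "\<And>f g. P f \<Longrightarrow> P g \<Longrightarrow> P (f * g)"
    and const: "\<And>c. P (const c)"
    and var: "\<And>j. P (var j)"
  shows "P f"
proof -
  have sum: "(\<And>x. x \<in> A \<Longrightarrow> P (G x)) \<Longrightarrow> P (\<Sum>x\<in>A. G x)" for A :: "'a set" and G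
    using const[of 0] by (induction A rule: infinite_finite_induct) (simp_all add: add)
  have prod: "(\<And>x. x \<in> A \<Longrightarrow> P (G x)) \<Longrightarrow> P (\<Prod>x\<in>A. G x)" for A :: "'a set" and G
    using const[of 1] by (induction A rule: infinite_finite_induct) (simp_all add: mult)
  have power: "P (g ^ k)" if "P g" for g k
    using that const[of 1] by (induction k) (simp_all add: mult)
  have "f = (\<Sum>m\<in>keys f. const (lookup f m) * (\<Prod>x\<in>keys m. var x ^ lookup m x))"
    by (subst poly_mapping_sum_single, rule sum.cong[OF refl])
       (metis single_eq_const_mult monomial_eq_prod_var_power)
  also have "P \<dots>"
    by (intro sum mult const prod power var)
  finally show ?thesis .
qed

lemma cpoly_hom_eqI:
  assumes "cpoly_hom F" "cpoly_hom G" "\<And>j. F (var j) = G (var j)"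
  shows "F f = G f"
  using assms
  by (induction f rule: cpoly_induct) (simp_all add: cpoly_hom.hom_add cpoly_hom.hom_mult cpoly_hom.hom_const)

lemma (in cpoly_hom) dvd_diff_hom:
  assumes "\<And>j. a dvd var j - F (var j)"
  shows "a dvd f - F f"
proof (induction f rule: cpoly_induct)
  case (add f g)
  have "f + g - F (f + g) = (f - F f) + (g - F g)"
    by (simp add: hom_add algebra_simps)
  then show ?case
    using add by (simp only: dvd_add)
next
  case (mult f g)
  have "f * g - F (f * g) = f * (g - F g) + F g * (f - F f)"
    by (simp add: hom_mult algebra_simps)
  then show ?case
    using mult by simp
qed (simp_all add: assms hom_const)

definition multiplicative :: "((nat \<Rightarrow>\<^sub>0 nat) \<Rightarrow> cpoly) \<Rightarrow> bool" where
  "multiplicative M \<longleftrightarrow> M 0 = 1 \<and> (\<forall>a b. M (a + b) = M a * M b)"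

definition subst_monomials :: "((nat \<Rightarrow>\<^sub>0 nat) \<Rightarrow> cpoly) \<Rightarrow> cpoly \<Rightarrow> cpoly" where
  "subst_monomials M f = (\<Sum>m\<in>keys f. const (lookup f m) * M m)"

lemma subst_monomials_superset:
  assumes "finite S" "keys f \<subseteq> S"
  shows "subst_monomials M f = (\<Sum>m\<in>S. const (lookup f m) * M m)"
  unfolding subst_monomials_def using assms
  by (intro sum.mono_neutral_left) (auto simp: in_keys_iff)

lemma subst_monomials_add: "subst_monomials M (f + g) = subst_monomials M f + subst_monomials M g"
proof -
  let ?S = "keys f \<union> keys g"
  have "subst_monomials M (f + g) = (\<Sum>m\<in>?S. const (lookup (f + g) m) * M m)"
    by (rule subst_monomials_superset) (auto dest: subsetD[OF keys_add])
  also have "\<dots> = (\<Sum>m\<in>?S. const (lookup f m) * M m) + (\<Sum>m\<in>?S. const (lookup g m) * M m)"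
    by (simp add: lookup_add single_add distrib_right sum.distrib)
  also have "\<dots> = subst_monomials M f + subst_monomials M g"
    by (simp add: subst_monomials_superset[symmetric])
  finally show ?thesis .
qed

lemma subst_monomials_single: "subst_monomials M (single m c) = const c * M m"
  by (cases "c = 0") (simp_all add: subst_monomials_def)

lemma subst_monomials_sum: "subst_monomials M (\<Sum>x\<in>A. F x) = (\<Sum>x\<in>A. subst_monomials M (F x))"
  by (induction A rule: infinite_finite_induct)
     (simp_all add: subst_monomials_add, simp_all add: subst_monomials_def)

lemma subst_monomials_mult:
  assumes "multiplicative M"
  shows "subst_monomials M (f * g) = subst_monomials M f * subst_monomials M g"
proof -
  have "f * g = (\<Sum>a\<in>keys f. single a (lookup f a)) * (\<Sum>b\<in>keys g. single b (lookup g b))"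
    using poly_mapping_sum_single[of f] poly_mapping_sum_single[of g] by simp
  also have "\<dots> = (\<Sum>a\<in>keys f. \<Sum>b\<in>keys g. single (a + b) (lookup f a * lookup g b))"
    by (simp add: sum_product mult_single)
  finally have "subst_monomials M (f * g) =
      (\<Sum>a\<in>keys f. \<Sum>b\<in>keys g. const (lookup f a * lookup g b) * M (a + b))"
    by (simp add: subst_monomials_sum subst_monomials_single)
  also have "\<dots> = (\<Sum>a\<in>keys f. \<Sum>b\<in>keys g. (const (lookup f a) * M a) * (const (lookup g b) * M b))"
    using assms by (simp add: multiplicative_def const_mult mult_ac)
  also have "\<dots> = subst_monomials M f * subst_monomials M g"
    by (simp add: subst_monomials_def sum_product)
  finally show ?thesis .
qed

lemma cpoly_hom_subst_monomials: "multiplicative M \<Longrightarrow> cpoly_hom (subst_monomials M)"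
  by unfold_locales
     (simp_all add: subst_monomials_add subst_monomials_mult subst_monomials_single multiplicative_def)

lemma additive_cpoly_map_eqI:
  fixes F G :: "cpoly \<Rightarrow> cpoly"
  assumes "\<And>f g. F (f + g) = F f + F g" "\<And>f g. G (f + g) = G f + G g"
    and "\<And>m c. F (single m c) = G (single m c)"
  shows "F p = G p"
proof -
  have sum: "H (\<Sum>x\<in>A. K x) = (\<Sum>x\<in>A. H (K x))"
    if "\<And>f g. H (f + g) = H f + H g" for H :: "cpoly \<Rightarrow> cpoly" and A :: "'a set" and K
    using that that[of 0 0] by (induction A rule: infinite_finite_induct) simp_all
  have "F p = (\<Sum>x\<in>keys p. F (single x (lookup p x)))"
    by (subst poly_mapping_sum_single) (rule sum[OF assms(1)])
  also have "\<dots> = G p"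
    by (subst (2) poly_mapping_sum_single) (simp add: sum[OF assms(2)] assms(3))
  finally show ?thesis .
qed

lemma map_key_inv_cancel:
  assumes "bij u"
  shows "Poly_Mapping.map_key (inv u) (Poly_Mapping.map_key u m) = m"
    and "Poly_Mapping.map_key u (Poly_Mapping.map_key (inv u) m) = m"
proof -
  have "u \<circ> inv u = id" "inv u \<circ> u = id"
    using assms by (metis bij_is_surj surj_iff, metis bij_is_inj inj_iff)
  then show "Poly_Mapping.map_key (inv u) (Poly_Mapping.map_key u m) = m"
    and "Poly_Mapping.map_key u (Poly_Mapping.map_key (inv u) m) = m"
    using assms by (simp_all add: map_key_compose bij_is_inj bij_imp_bij_inv map_key_id[folded id_def])
qed

lemma lookup_perm_poly:
  assumes "bij u"
  shows "lookup (perm_poly u f) m = lookup f (Poly_Mapping.map_key u m)"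
proof -
  have "{m. lookup f (Poly_Mapping.map_key u m) \<noteq> 0} \<subseteq> Poly_Mapping.map_key (inv u) ` keys f"
  proof
    fix m assume "m \<in> {m. lookup f (Poly_Mapping.map_key u m) \<noteq> 0}"
    then have "Poly_Mapping.map_key u m \<in> keys f"
      by (simp add: in_keys_iff)
    then show "m \<in> Poly_Mapping.map_key (inv u) ` keys f"
      using map_key_inv_cancel(1)[OF assms, of m] by (metis image_eqI)
  qed
  then have "finite {m. lookup f (Poly_Mapping.map_key u m) \<noteq> 0}"
    by (rule finite_subset) simp
  then show ?thesis
    unfolding perm_poly_def by (subst Abs_poly_mapping_inverse) auto
qed

lemma perm_poly_single:
  assumes "bij u"
  shows "perm_poly u (single m c) = single (Poly_Mapping.map_key (inv u) m) c"
proof (rule poly_mapping_eqI)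
  fix m'
  have "m = Poly_Mapping.map_key u m' \<longleftrightarrow> Poly_Mapping.map_key (inv u) m = m'"
    using map_key_inv_cancel[OF assms] by metis
  then show "lookup (perm_poly u (single m c)) m' = lookup (single (Poly_Mapping.map_key (inv u) m) c) m'"
    by (simp add: lookup_perm_poly[OF assms] lookup_single when_def)
qed

lemma cpoly_hom_perm_poly:
  assumes "bij u"
  shows "cpoly_hom (perm_poly u)"
proof -
  let ?M = "\<lambda>m. single (Poly_Mapping.map_key (inv u) m) 1"
  have "multiplicative ?M"
    using assms by (simp add: multiplicative_def mult_single map_key_plus bij_is_inj bij_imp_bij_inv)
  have "perm_poly u (f + g) = perm_poly u f + perm_poly u g" for f g
    by (rule poly_mapping_eqI) (simp add: lookup_perm_poly[OF assms] lookup_add)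
  then have "perm_poly u f = subst_monomials ?M f" for f
    by (rule additive_cpoly_map_eqI[OF _ subst_monomials_add])
       (simp add: perm_poly_single[OF assms] subst_monomials_single mult_single)
  then have "perm_poly u = subst_monomials ?M"
    by (rule ext)
  with \<open>multiplicative ?M\<close> show ?thesis
    by (simp add: cpoly_hom_subst_monomials)
qed

lemma perm_poly_var:
  assumes "bij u"
  shows "perm_poly u (var j) = var (u j)"
proof -
  have "Poly_Mapping.map_key (inv u) (single (inv u (u j)) 1) = single (u j) (1::nat)"
    using assms by (intro map_key_single) (simp add: bij_is_inj bij_imp_bij_inv)
  then show ?thesis
    using assms by (simp add: var_def perm_poly_single bij_is_inj)
qed

lemma perm_poly_comp:
  assumes "bij u" "bij v"
  shows "perm_poly u (perm_poly v f) = perm_poly (u \<circ> v) f"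
  using assms
  by (intro poly_mapping_eqI) (simp add: lookup_perm_poly bij_comp map_key_compose bij_is_inj)

lemma perm_poly_id: "perm_poly id f = f"
  by (rule poly_mapping_eqI) (simp add: lookup_perm_poly map_key_id[folded id_def])

definition rename_vars :: "(nat \<Rightarrow> nat) \<Rightarrow> cpoly \<Rightarrow> cpoly" where
  "rename_vars \<sigma> = subst_monomials (\<lambda>m. \<Prod>x\<in>keys m. var (\<sigma> x) ^ lookup m x)"

lemma cpoly_hom_rename_vars: "cpoly_hom (rename_vars \<sigma>)"
proof -
  let ?M = "\<lambda>m. \<Prod>x\<in>keys m. var (\<sigma> x) ^ lookup m x"
  have M: "?M m = (\<Prod>x\<in>S. var (\<sigma> x) ^ lookup m x)" if "finite S" "keys m \<subseteq> S" for m S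
    using that by (intro prod.mono_neutral_left) (auto simp: in_keys_iff)
  have "?M (a + b) = ?M a * ?M b" for a b
  proof -
    let ?S = "keys a \<union> keys b"
    have "?M (a + b) = (\<Prod>x\<in>?S. var (\<sigma> x) ^ lookup (a + b) x)"
      by (rule M) (auto simp: keys_add_nat)
    also have "\<dots> = (\<Prod>x\<in>?S. var (\<sigma> x) ^ lookup a x) * (\<Prod>x\<in>?S. var (\<sigma> x) ^ lookup b x)"
      by (simp add: lookup_add power_add prod.distrib)
    also have "\<dots> = ?M a * ?M b"
      by (subst (1 2) M[of ?S]) auto
    finally show ?thesis .
  qed
  then have "multiplicative ?M"
    by (simp add: multiplicative_def)
  then show ?thesis
    unfolding rename_vars_def by (rule cpoly_hom_subst_monomials)
qed

interpretation rename_vars: cpoly_hom "rename_vars \<sigma>"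
  by (rule cpoly_hom_rename_vars)

lemma rename_vars_var: "rename_vars \<sigma> (var j) = var (\<sigma> j)"
  by (simp add: rename_vars_def var_def subst_monomials_single)

lemma var_diff_dvd_iff:
  assumes "c \<noteq> d"
  shows "(var c - var d) dvd f \<longleftrightarrow> rename_vars (id(c := d)) f = 0"
proof
  assume "(var c - var d) dvd f"
  then have "rename_vars (id(c := d)) (var c - var d) dvd rename_vars (id(c := d)) f"
    by (rule rename_vars.hom_dvd)
  then show "rename_vars (id(c := d)) f = 0"
    using assms by (simp add: rename_vars.hom_diff rename_vars_var)
next
  assume "rename_vars (id(c := d)) f = 0"
  moreover have "(var c - var d) dvd f - rename_vars (id(c := d)) f"
    by (rule rename_vars.dvd_diff_hom) (simp add: rename_vars_var)
  ultimately show "(var c - var d) dvd f"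
    by simp
qed

lemma var_diff_dvd_mult_cancel:
  assumes "c \<noteq> d" "(var c - var d) dvd g * r" "rename_vars (id(c := d)) g \<noteq> 0"
  shows "(var c - var d) dvd r"
  using assms by (simp add: var_diff_dvd_iff rename_vars.hom_mult)

lemma rename_vars_var_diff_nonzero:
  assumes "a < b" "c < d" "(a, b) \<noteq> (c, d)"
  shows "rename_vars (id(c := d)) (var a - var b) \<noteq> 0"
  using assms by (auto simp: rename_vars.hom_diff rename_vars_var var_eq_iff)

lemma prod_var_diff_dvd:
  assumes "finite S" "\<And>a b. (a, b) \<in> S \<Longrightarrow> a < b \<and> (var a - var b) dvd g"
  shows "(\<Prod>(a, b)\<in>S. var a - var b) dvd g"
  using assms
proof (induction S rule: finite_induct)
  case (insert p S)
  obtain c d where p: "p = (c, d)"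
    by force
  have cd: "c < d" "(var c - var d) dvd g"
    using insert.prems p by auto
  have "(\<Prod>(a, b)\<in>S. var a - var b) dvd g"
    using insert.IH insert.prems by blast
  then obtain r where r: "g = (\<Prod>(a, b)\<in>S. var a - var b) * r"
    by (rule dvdE)
  have "rename_vars (id(c := d)) (case q of (a, b) \<Rightarrow> var a - var b) \<noteq> 0" if "q \<in> S" for q
  proof -
    obtain a b where q: "q = (a, b)"
      by force
    have "a < b" "(a, b) \<noteq> (c, d)"
      using that q insert.hyps(2) insert.prems p by auto
    then show ?thesis
      using q cd(1) by (simp add: rename_vars_var_diff_nonzero)
  qed
  then have "rename_vars (id(c := d)) (\<Prod>(a, b)\<in>S. var a - var b) \<noteq> 0"
    using insert.hyps(1) by (simp add: rename_vars.hom_prod prod_zero_iff)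
  then have "(var c - var d) dvd r"
    by (rule var_diff_dvd_mult_cancel[rotated 2]) (use cd r in simp_all)
  then obtain k where k: "r = (var c - var d) * k"
    by (rule dvdE)
  have "g = (\<Prod>(a, b)\<in>insert p S. var a - var b) * k"
    using r k insert.hyps p by (simp add: mult_ac)
  then show ?case
    by (rule dvdI)
qed simp

definition restrict_vars :: "nat \<Rightarrow> cpoly \<Rightarrow> cpoly" where
  "restrict_vars n = subst_monomials (\<lambda>m. if keys m \<subseteq> {1..n} then single m 1 else 0)"

interpretation restrict_vars: cpoly_hom "restrict_vars n"
  unfolding restrict_vars_def
  by (rule cpoly_hom_subst_monomials) (auto simp: multiplicative_def keys_add_nat mult_single)

lemma restrict_vars_in_polys: "restrict_vars n f \<in> polys n"
proof -
  have "keys (restrict_vars n f) \<subseteq>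
      (\<Union>m\<in>keys f. keys (const (lookup f m) * (if keys m \<subseteq> {1..n} then single m 1 else 0)))"
    unfolding restrict_vars_def subst_monomials_def by (rule keys_sum)
  also have "\<dots> \<subseteq> {m. keys m \<subseteq> {1..n}}"
    by (auto simp: mult_single split: if_splits dest!: subsetD)
  finally show ?thesis
    by (auto simp: polys_def)
qed

lemma restrict_vars_polys:
  assumes "f \<in> polys n"
  shows "restrict_vars n f = f"
proof -
  have "restrict_vars n f = (\<Sum>m\<in>keys f. single m (lookup f m))"
    using assms unfolding restrict_vars_def subst_monomials_def polys_def
    by (intro sum.cong) (simp_all add: mult_single)
  then show ?thesis
    by (simp flip: poly_mapping_sum_single)
qed

lemma polys_iff_restrict_vars: "f \<in> polys n \<longleftrightarrow> restrict_vars n f = f"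
  by (metis restrict_vars_in_polys restrict_vars_polys)

lemma polys_add: "f \<in> polys n \<Longrightarrow> g \<in> polys n \<Longrightarrow> f + g \<in> polys n"
  by (simp add: polys_iff_restrict_vars restrict_vars.hom_add)

lemma polys_diff: "f \<in> polys n \<Longrightarrow> g \<in> polys n \<Longrightarrow> f - g \<in> polys n"
  by (simp add: polys_iff_restrict_vars restrict_vars.hom_diff)

lemma polys_mult: "f \<in> polys n \<Longrightarrow> g \<in> polys n \<Longrightarrow> f * g \<in> polys n"
  by (simp add: polys_iff_restrict_vars restrict_vars.hom_mult)

lemma polys_zero: "0 \<in> polys n"
  by (simp add: polys_iff_restrict_vars restrict_vars.hom_zero)

lemma polys_prod: "(\<And>x. x \<in> A \<Longrightarrow> F x \<in> polys n) \<Longrightarrow> (\<Prod>x\<in>A. F x) \<in> polys n"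
  by (simp add: polys_iff_restrict_vars restrict_vars.hom_prod)

lemma polys_var: "j \<in> {1..n} \<Longrightarrow> var j \<in> polys n"
  by (simp add: polys_def var_def)

lemma polys_mult_cancel:
  assumes "a \<in> polys n" "a \<noteq> 0" "a * r \<in> polys n"
  shows "r \<in> polys n"
  using assms
  by (metis mult_left_cancel polys_iff_restrict_vars restrict_vars.hom_mult)

lemma perm_poly_polys:
  assumes "u permutes {1..n}" "f \<in> polys n"
  shows "perm_poly u f \<in> polys n"
proof -
  have u: "bij u"
    using assms(1) by (rule permutes_bij)
  interpret perm: cpoly_hom "perm_poly u"
    using u by (rule cpoly_hom_perm_poly)
  have "(restrict_vars n \<circ> perm_poly u) (var j) = (perm_poly u \<circ> restrict_vars n) (var j)" for j
  proof (cases "j \<in> {1..n}")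
    case True
    then have "u j \<in> {1..n}"
      using assms(1) by (metis permutes_in_image)
    then show ?thesis
      using True by (simp add: perm_poly_var u restrict_vars_polys polys_var)
  next
    case False
    then have "restrict_vars n (var j) = 0"
      by (auto simp: restrict_vars_def var_def subst_monomials_single)
    then show ?thesis
      using False assms(1) by (simp add: perm_poly_var u permutes_not_in perm.hom_zero)
  qed
  moreover have "cpoly_hom (restrict_vars n \<circ> perm_poly u)" "cpoly_hom (perm_poly u \<circ> restrict_vars n)"
    by (simp_all add: cpoly_hom_comp restrict_vars.cpoly_hom_axioms perm.cpoly_hom_axioms)
  ultimately have "(restrict_vars n \<circ> perm_poly u) f = (perm_poly u \<circ> restrict_vars n) f"
    using cpoly_hom_eqI by blast
  then show ?thesis
    using assms(2) by (simp add: polys_iff_restrict_vars)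
qed

section \<open>Degrees\<close>

lemma mdeg_superset: "finite S \<Longrightarrow> keys m \<subseteq> S \<Longrightarrow> mdeg m = (\<Sum>x\<in>S. lookup m x)"
  unfolding mdeg_def by (intro sum.mono_neutral_left) (auto simp: in_keys_iff)

lemma mdeg_add: "mdeg (a + b) = mdeg a + mdeg b"
proof -
  let ?S = "keys a \<union> keys b"
  have "mdeg (a + b) = (\<Sum>x\<in>?S. lookup a x) + (\<Sum>x\<in>?S. lookup b x)"
    by (subst mdeg_superset[of ?S]) (auto simp: keys_add_nat lookup_add sum.distrib)
  also have "\<dots> = mdeg a + mdeg b"
    by (subst (1 2) mdeg_superset[of ?S]) auto
  finally show ?thesis .
qed

lemma mdeg_map_key:
  assumes "bij u"
  shows "mdeg (Poly_Mapping.map_key u m) = mdeg m"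
proof -
  have u: "inj u"
    using assms by (rule bij_is_inj)
  have "mdeg (Poly_Mapping.map_key u m) = (\<Sum>x\<in>u -` keys m. lookup m (u x))"
    by (simp add: mdeg_def keys_map_key[OF u] map_key.rep_eq[OF u])
  also have "\<dots> = (\<Sum>y\<in>u ` (u -` keys m). lookup m y)"
    by (rule sum.reindex[symmetric, unfolded o_def]) (simp add: inj_on_def u[unfolded inj_def])
  also have "u ` (u -` keys m) = keys m"
    using assms by (simp add: bij_is_surj surj_image_vimage_eq)
  finally show ?thesis
    by (simp add: mdeg_def)
qed

lemma mdeg_single [simp]: "mdeg (single j k) = k"
  by (cases "k = 0") (simp_all add: mdeg_def)

lemma homogeneous_zero [simp]: "homogeneous d 0"
  by (simp add: homogeneous_def)

lemma homogeneous_add: "homogeneous d f \<Longrightarrow> homogeneous d g \<Longrightarrow> homogeneous d (f + g)"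
  unfolding homogeneous_def using keys_add[of f g] by blast

lemma homogeneous_uminus: "homogeneous d f \<Longrightarrow> homogeneous d (- f)"
  by (simp add: homogeneous_def)

lemma homogeneous_diff: "homogeneous d f \<Longrightarrow> homogeneous d g \<Longrightarrow> homogeneous d (f - g)"
  using homogeneous_add[of d f "- g"] homogeneous_uminus[of d g] by simp

lemma homogeneous_mult: "homogeneous d f \<Longrightarrow> homogeneous e g \<Longrightarrow> homogeneous (d + e) (f * g)"
  unfolding homogeneous_def using keys_mult[of f g] by (force simp: mdeg_add)

lemma homogeneous_var_diff: "homogeneous 1 (var a - var b)"
  by (intro homogeneous_diff) (simp_all add: homogeneous_def var_def)

lemma homogeneous_one: "homogeneous 0 1"
  by (simp add: homogeneous_def mdeg_def)

lemma homogeneous_prod: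
  "(\<And>x. x \<in> A \<Longrightarrow> homogeneous (D x) (F x)) \<Longrightarrow> homogeneous (\<Sum>x\<in>A. D x) (\<Prod>x\<in>A. F x)"
  by (induction A rule: infinite_finite_induct) (simp_all add: homogeneous_one homogeneous_mult)

lemma homogeneous_perm_poly:
  assumes "bij u" "homogeneous d f"
  shows "homogeneous d (perm_poly u f)"
  unfolding homogeneous_def
proof
  fix m
  assume "m \<in> keys (perm_poly u f)"
  then have "Poly_Mapping.map_key u m \<in> keys f"
    by (simp add: in_keys_iff lookup_perm_poly[OF assms(1)])
  then show "mdeg m = d"
    using assms mdeg_map_key[OF assms(1), of m] by (simp add: homogeneous_def)
qed

definition homogeneous_part :: "nat \<Rightarrow> cpoly \<Rightarrow> cpoly" where
  "homogeneous_part k f = Abs_poly_mapping (\<lambda>m. if mdeg m = k then lookup f m else 0)"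

lemma lookup_homogeneous_part:
  "lookup (homogeneous_part k f) m = (if mdeg m = k then lookup f m else 0)"
proof -
  have "finite {m. (if mdeg m = k then lookup f m else 0) \<noteq> 0}"
    by (rule finite_subset[of _ "keys f"]) (auto simp: in_keys_iff split: if_splits)
  then show ?thesis
    unfolding homogeneous_part_def by (subst Abs_poly_mapping_inverse) auto
qed

lemma homogeneous_part_sum:
  "homogeneous_part k (\<Sum>x\<in>A. F x) = (\<Sum>x\<in>A. homogeneous_part k (F x))"
  by (rule poly_mapping_eqI) (simp add: lookup_homogeneous_part lookup_sum)

lemma homogeneous_part_homogeneous:
  "homogeneous d g \<Longrightarrow> homogeneous_part k g = (if k = d then g else 0)"
  by (rule poly_mapping_eqI) (auto simp: lookup_homogeneous_part homogeneous_def in_keys_iff)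

lemma homogeneous_homogeneous_part: "homogeneous k (homogeneous_part k f)"
  by (auto simp: homogeneous_def in_keys_iff lookup_homogeneous_part split: if_splits)

lemma sum_homogeneous_parts:
  assumes "finite D" "mdeg ` keys f \<subseteq> D"
  shows "f = (\<Sum>k\<in>D. homogeneous_part k f)"
proof (rule poly_mapping_eqI)
  fix m
  show "lookup f m = lookup (\<Sum>k\<in>D. homogeneous_part k f) m"
    using assms by (cases "m \<in> keys f") (auto simp: lookup_sum lookup_homogeneous_part in_keys_iff)
qed

lemma homogeneous_part_mult:
  assumes "homogeneous e h"
  shows "homogeneous_part (e + k) (h * r) = h * homogeneous_part k r"
proof -
  let ?D = "insert k (mdeg ` keys r)"
  have "h * r = (\<Sum>j\<in>?D. h * homogeneous_part j r)"
    by (subst sum_homogeneous_parts[of ?D r]) (auto simp: sum_distrib_left)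
  then have "homogeneous_part (e + k) (h * r) = (\<Sum>j\<in>?D. homogeneous_part (e + k) (h * homogeneous_part j r))"
    by (simp add: homogeneous_part_sum)
  also have "\<dots> = (\<Sum>j\<in>?D. if j = k then h * homogeneous_part k r else 0)"
  proof (rule sum.cong[OF refl])
    fix j
    have "homogeneous (e + j) (h * homogeneous_part j r)"
      by (intro homogeneous_mult assms homogeneous_homogeneous_part)
    then show "homogeneous_part (e + k) (h * homogeneous_part j r) = (if j = k then h * homogeneous_part k r else 0)"
      by (simp add: homogeneous_part_homogeneous)
  qed
  finally show ?thesis
    by simp
qed

lemma homogeneous_mult_cancel:
  assumes "homogeneous e h" "h \<noteq> 0" "homogeneous d (h * r)" "r \<noteq> 0"
  shows "homogeneous (d - e) r \<and> e \<le> d"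
proof -
  have deg: "e + mdeg m = d" if m: "m \<in> keys r" for m
  proof (rule ccontr)
    assume "e + mdeg m \<noteq> d"
    then have "h * homogeneous_part (mdeg m) r = 0"
      using assms(1,3) by (simp add: homogeneous_part_homogeneous flip: homogeneous_part_mult)
    moreover have "lookup (homogeneous_part (mdeg m) r) m \<noteq> 0"
      using m by (simp add: lookup_homogeneous_part in_keys_iff)
    ultimately show False
      using assms(2) by auto
  qed
  obtain m where "m \<in> keys r"
    using assms(4) by (metis keys_eq_empty ex_in_conv)
  then show ?thesis
    using deg by (fastforce simp: homogeneous_def)
qed

section \<open>Inversions and the Bruhat order\<close>

definition inversion_pairs :: "nat \<Rightarrow> (nat \<Rightarrow> 'a::linorder) \<Rightarrow> (nat \<times> nat) set" where
  "inversion_pairs n X = {(a, b). 1 \<le> a \<and> a < b \<and> b \<le> n \<and> X b < X a}"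

lemma finite_inversion_pairs: "finite (inversion_pairs n X)"
  by (rule finite_subset[of _ "{1..n} \<times> {1..n}"]) (auto simp: inversion_pairs_def)

lemma Inv_eq_image_inversion_pairs: "Inv n u = (\<lambda>(a, b). var a - var b) ` inversion_pairs n (inv u)"
  by (auto simp: Inv_def inversion_pairs_def)

lemma inj_on_var_diff_inversion_pairs: "inj_on (\<lambda>(a, b). var a - var b) (inversion_pairs n X)"
  by (auto simp: inj_on_def inversion_pairs_def var_diff_eq_iff)

lemma len_eq_card_inversion_pairs: "len n u = card (inversion_pairs n (inv u))"
  unfolding len_def Inv_eq_image_inversion_pairs
  by (rule card_image[OF inj_on_var_diff_inversion_pairs])

lemma prod_Inv: "(\<Prod>\<beta>\<in>Inv n u. \<beta>) = (\<Prod>(a, b)\<in>inversion_pairs n (inv u). var a - var b)"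
  unfolding Inv_eq_image_inversion_pairs
  by (subst prod.reindex[OF inj_on_var_diff_inversion_pairs]) (simp add: case_prod_beta o_def)

text \<open>This involution injects the inversions of \<open>X\<close> into those of \<open>X \<circ> transpose j k\<close> other
  than \<open>(j, k)\<close>.\<close>
definition swap_pair :: "nat \<Rightarrow> nat \<Rightarrow> nat \<times> nat \<Rightarrow> nat \<times> nat" where
  "swap_pair j k = (\<lambda>(a, b). if j < a \<and> a < k \<or> j < b \<and> b < k then (a, b)
     else (transpose j k a, transpose j k b))"

lemma swap_pair_swap_pair: "j < k \<Longrightarrow> swap_pair j k (swap_pair j k p) = p"
  by (cases p) (auto simp: swap_pair_def transpose_def)

lemma swap_pair_inversion_pairs:
  assumes jk: "1 \<le> j" "j < k" "k \<le> n" and X: "X j < X k" and p: "p \<in> inversion_pairs n X"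
  shows "swap_pair j k p \<in> inversion_pairs n (X \<circ> transpose j k) - {(j, k)}"
proof -
  obtain a b where ab: "p = (a, b)" "1 \<le> a" "a < b" "b \<le> n" "X b < X a"
    using p by (auto simp: inversion_pairs_def)
  show ?thesis
  proof (cases "j < a \<and> a < k \<or> j < b \<and> b < k")
    case True
    then have "X (transpose j k b) < X (transpose j k a)"
      using ab X by (auto simp: transpose_def)
    then show ?thesis
      using True ab by (auto simp: swap_pair_def inversion_pairs_def)
  next
    case False
    then have "(a, b) \<noteq> (j, k)"
      using ab X by auto
    then show ?thesis
      using False ab jk by (auto simp: swap_pair_def inversion_pairs_def transpose_def)
  qed
qed

lemma card_inversion_pairs_transpose_less:
  assumes jk: "1 \<le> j" "j < k" "k \<le> n" and X: "X j < X k"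
  shows "card (inversion_pairs n X) < card (inversion_pairs n (X \<circ> transpose j k))"
proof -
  have "inj (swap_pair j k)"
    using swap_pair_swap_pair[OF jk(2)] by (metis injI)
  then have "card (inversion_pairs n X) = card (swap_pair j k ` inversion_pairs n X)"
    by (simp add: card_image inj_on_subset)
  also have "\<dots> \<le> card (inversion_pairs n (X \<circ> transpose j k) - {(j, k)})"
    using swap_pair_inversion_pairs[OF jk X] by (intro card_mono image_subsetI) (simp_all add: finite_inversion_pairs)
  also have "\<dots> < card (inversion_pairs n (X \<circ> transpose j k))"
    using jk X by (intro card_Diff1_less finite_inversion_pairs) (simp add: inversion_pairs_def)
  finally show ?thesis .
qed

lemma Sn_bij: "u \<in> Sn n \<Longrightarrow> bij u"
  by (simp add: Sn_def permutes_bij)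

lemma Sn_inv_eq_iff: "u \<in> Sn n \<Longrightarrow> inv u a = inv u b \<longleftrightarrow> a = b"
  by (metis Sn_bij bij_inv_eq_iff)

lemma transpose_comp_Sn:
  "j \<in> {1..n} \<Longrightarrow> k \<in> {1..n} \<Longrightarrow> u \<in> Sn n \<Longrightarrow> transpose j k \<circ> u \<in> Sn n"
  by (simp add: Sn_def permutes_compose permutes_swap_id)

lemma inv_transpose_comp: "bij u \<Longrightarrow> inv (transpose j k \<circ> u) = inv u \<circ> transpose j k"
  by (simp add: o_inv_distrib)

lemma len_transpose_less:
  assumes "u \<in> Sn n" "1 \<le> j" "j < k" "k \<le> n" "inv u j < inv u k"
  shows "len n u < len n (transpose j k \<circ> u)"
  using assms card_inversion_pairs_transpose_less[of j k n "inv u"]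
  by (simp add: len_eq_card_inversion_pairs inv_transpose_comp Sn_bij)

lemma len_transpose_greater:
  assumes "u \<in> Sn n" "1 \<le> j" "j < k" "k \<le> n" "inv u k < inv u j"
  shows "len n (transpose j k \<circ> u) < len n u"
proof -
  have "transpose j k \<circ> (transpose j k \<circ> u) = u"
    by (simp add: o_assoc)
  moreover have "len n (transpose j k \<circ> u) < len n (transpose j k \<circ> (transpose j k \<circ> u))"
    using assms by (intro len_transpose_less transpose_comp_Sn) (simp_all add: inv_transpose_comp Sn_bij)
  ultimately show ?thesis
    by simp
qed

lemma rtranclp_bruhat_step_len:
  "(bruhat_step n)\<^sup>*\<^sup>* v w \<Longrightarrow> v = w \<or> len n v < len n w"
  by (induction rule: rtranclp_induct) (auto simp: bruhat_step_def)

lemma bruhat_le_len: "bruhat_le n v w \<Longrightarrow> len n v \<le> len n w"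
  unfolding bruhat_le_def using rtranclp_bruhat_step_len by fastforce

lemma bruhat_le_len_less: "bruhat_le n v w \<Longrightarrow> v \<noteq> w \<Longrightarrow> len n v < len n w"
  unfolding bruhat_le_def using rtranclp_bruhat_step_len by fastforce

lemma bruhat_le_refl: "v \<in> Sn n \<Longrightarrow> bruhat_le n v v"
  by (simp add: bruhat_le_def)

lemma bruhat_le_trans: "bruhat_le n u v \<Longrightarrow> bruhat_le n v w \<Longrightarrow> bruhat_le n u w"
  unfolding bruhat_le_def by (meson rtranclp_trans)

lemma rtranclp_bruhat_step_Sn: "(bruhat_step n)\<^sup>*\<^sup>* v w \<Longrightarrow> v \<in> Sn n \<Longrightarrow> w \<in> Sn n"
  by (induction rule: rtranclp_induct) (auto simp: bruhat_step_def intro: transpose_comp_Sn)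

lemma bruhat_le_transpose:
  assumes "z \<in> Sn n" "1 \<le> j" "j < k" "k \<le> n" "inv z j < inv z k"
  shows "bruhat_le n z (transpose j k \<circ> z)"
proof -
  have "bruhat_step n z (transpose j k \<circ> z)"
    unfolding bruhat_step_def using assms len_transpose_less[OF assms] by blast
  then show ?thesis
    using assms by (simp add: bruhat_le_def transpose_comp_Sn)
qed

lemma bruhat_stepE:
  assumes "z \<in> Sn n" "bruhat_step n z z'"
  obtains j k where "1 \<le> j" "j < k" "k \<le> n" "z' = transpose j k \<circ> z" "inv z j < inv z k"
proof -
  obtain j k where jk: "1 \<le> j" "j < k" "k \<le> n" "z' = transpose j k \<circ> z" "len n z < len n z'"
    using assms(2) by (auto simp: bruhat_step_def)
  have "inv z j \<noteq> inv z k"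
    using Sn_inv_eq_iff[OF assms(1)] jk(2) by simp
  moreover have "\<not> inv z k < inv z j"
    using len_transpose_greater[OF assms(1) jk(1-3)] jk(4,5) by auto
  ultimately have "inv z j < inv z k"
    by linarith
  then show ?thesis
    using that jk by blast
qed

definition descent :: "nat \<Rightarrow> (nat \<Rightarrow> nat) \<Rightarrow> bool" where
  "descent i v \<longleftrightarrow> inv v (Suc i) < inv v i"

lemma sref_sref [simp]: "sref i (sref i x) = x"
  by (simp add: sref_def)

lemma sref_comp_sref [simp]: "sref i \<circ> sref i = id"
  by (rule ext) simp

lemma sref_comp_sref_comp [simp]: "sref i \<circ> (sref i \<circ> u) = u"
  by (rule ext) simp

lemma sref_comp_transpose:
  "sref i \<circ> transpose j k = transpose (sref i j) (sref i k) \<circ> sref i"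
  by (rule ext) (auto simp: sref_def transpose_def)

lemma perm_poly_sref_var: "perm_poly (sref i) (var j) = var (sref i j)"
  by (rule perm_poly_var) (simp add: sref_def)

interpretation perm_sref: cpoly_hom "perm_poly (sref i)"
  by (rule cpoly_hom_perm_poly) (simp add: sref_def)

lemma perm_poly_sref_sref: "perm_poly (sref i) (perm_poly (sref i) f) = f"
  by (simp add: perm_poly_comp sref_def perm_poly_id flip: id_def)

context
  fixes n i :: nat
  assumes i: "1 \<le> i" "Suc i \<le> n"
begin

lemma sref_permutes: "sref i permutes {1..n}"
  unfolding sref_def using i by (intro permutes_swap_id) auto

lemma sref_comp_Sn: "u \<in> Sn n \<Longrightarrow> sref i \<circ> u \<in> Sn n"
  unfolding sref_def using i by (intro transpose_comp_Sn) auto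

lemma sref_comp_Sn_iff: "sref i \<circ> u \<in> Sn n \<longleftrightarrow> u \<in> Sn n"
  using sref_comp_Sn sref_comp_sref_comp by metis

lemma inv_sref_comp: "u \<in> Sn n \<Longrightarrow> inv (sref i \<circ> u) = inv u \<circ> sref i"
  unfolding sref_def by (rule inv_transpose_comp[OF Sn_bij])

lemma inv_sref_comp_apply: "u \<in> Sn n \<Longrightarrow> inv (sref i \<circ> u) a = inv u (sref i a)"
  by (simp add: inv_sref_comp)

lemma descent_sref_comp:
  assumes "u \<in> Sn n"
  shows "descent i (sref i \<circ> u) \<longleftrightarrow> \<not> descent i u"
proof -
  have "inv (sref i \<circ> u) (Suc i) = inv u i" "inv (sref i \<circ> u) i = inv u (Suc i)"
    by (simp_all add: inv_sref_comp[OF assms], simp_all add: sref_def)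
  moreover have "inv u i \<noteq> inv u (Suc i)"
    using Sn_inv_eq_iff[OF assms] by simp
  ultimately show ?thesis
    by (auto simp: descent_def)
qed

lemma inversion_pairs_sref:
  "bij_betw (\<lambda>(a, b). (sref i a, sref i b))
     (inversion_pairs n X - {(i, Suc i)}) (inversion_pairs n (X \<circ> sref i) - {(i, Suc i)})"
proof -
  have maps: "(sref i a, sref i b) \<in> inversion_pairs n (Y \<circ> sref i) - {(i, Suc i)}"
    if "(a, b) \<in> inversion_pairs n Y - {(i, Suc i)}" for a b and Y :: "nat \<Rightarrow> 'a"
    using that i by (auto simp: inversion_pairs_def sref_def transpose_def)
  show ?thesis
  proof (rule bij_betw_byWitness[where f' = "\<lambda>(a, b). (sref i a, sref i b)"])
    show "(\<lambda>(a, b). (sref i a, sref i b)) ` (inversion_pairs n (X \<circ> sref i) - {(i, Suc i)})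
        \<subseteq> inversion_pairs n X - {(i, Suc i)}"
      using maps[where Y = "X \<circ> sref i"] by (auto simp flip: o_assoc)
  qed (use maps in auto)
qed

lemma len_sref_comp:
  assumes "u \<in> Sn n" "descent i u"
  shows "len n (sref i \<circ> u) + 1 = len n u"
proof -
  let ?X = "inv u"
  have "(i, Suc i) \<in> inversion_pairs n ?X" "(i, Suc i) \<notin> inversion_pairs n (?X \<circ> sref i)"
    using assms i by (simp_all add: inversion_pairs_def descent_def sref_def)
  moreover have "card (inversion_pairs n ?X - {(i, Suc i)}) = card (inversion_pairs n (?X \<circ> sref i) - {(i, Suc i)})"
    by (rule bij_betw_same_card[OF inversion_pairs_sref])
  moreover have "card (inversion_pairs n ?X) > 0"
    using calculation(1) finite_inversion_pairs card_gt_0_iff by blast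
  ultimately show ?thesis
    using assms(1) by (simp add: len_eq_card_inversion_pairs inv_sref_comp)
qed

lemma prod_Inv_sref_comp:
  assumes "u \<in> Sn n" "descent i u"
  shows "perm_poly (sref i) (\<Prod>\<beta>\<in>Inv n u. \<beta>) = - (var i - var (Suc i)) * (\<Prod>\<beta>\<in>Inv n (sref i \<circ> u). \<beta>)"
proof -
  let ?F = "\<lambda>(a, b). var a - var b" and ?h = "\<lambda>(a, b). (sref i a, sref i b)" and ?X = "inv u"
  have in_X: "(i, Suc i) \<in> inversion_pairs n ?X" and notin: "(i, Suc i) \<notin> inversion_pairs n (?X \<circ> sref i)"
    using assms i by (simp_all add: inversion_pairs_def descent_def sref_def)
  have "perm_poly (sref i) (\<Prod>\<beta>\<in>Inv n u. \<beta>) = (\<Prod>p\<in>inversion_pairs n ?X. ?F (?h p))"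
    by (simp add: prod_Inv perm_sref.hom_prod perm_sref.hom_diff perm_poly_sref_var split_def)
  also have "\<dots> = ?F (?h (i, Suc i)) * (\<Prod>p\<in>inversion_pairs n ?X - {(i, Suc i)}. ?F (?h p))"
    using in_X by (simp add: prod.remove finite_inversion_pairs del: prod.case)
  also have "(\<Prod>p\<in>inversion_pairs n ?X - {(i, Suc i)}. ?F (?h p)) =
      (\<Prod>p\<in>inversion_pairs n (?X \<circ> sref i) - {(i, Suc i)}. ?F p)"
    by (rule prod.reindex_bij_betw[OF inversion_pairs_sref])
  also have "inversion_pairs n (?X \<circ> sref i) - {(i, Suc i)} = inversion_pairs n (inv (sref i \<circ> u))"
    using notin by (simp add: inv_sref_comp[OF assms(1)])
  finally show ?thesis
    by (simp add: prod_Inv sref_def)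
qed

lemma bruhat_le_sref_comp:
  assumes "u \<in> Sn n" "\<not> descent i u"
  shows "bruhat_le n u (sref i \<circ> u)"
proof -
  have "inv u i \<noteq> inv u (Suc i)"
    using Sn_inv_eq_iff[OF assms(1)] by simp
  then have "inv u i < inv u (Suc i)"
    using assms(2) by (simp add: descent_def)
  then show ?thesis
    unfolding sref_def using i by (intro bruhat_le_transpose[OF assms(1)]) auto
qed

lemma sref_comp_bruhat_le:
  assumes "u \<in> Sn n" "descent i u"
  shows "bruhat_le n (sref i \<circ> u) u"
  using bruhat_le_sref_comp[of "sref i \<circ> u"] assms by (simp add: sref_comp_Sn descent_sref_comp)

lemma bruhat_lt_sref_comp_iff:
  assumes "u \<in> Sn n"
  shows "bruhat_lt n (sref i \<circ> u) u \<longleftrightarrow> descent i u"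
proof
  assume "bruhat_lt n (sref i \<circ> u) u"
  then show "descent i u"
    using len_sref_comp[of "sref i \<circ> u"] assms
    by (fastforce simp: bruhat_lt_def descent_sref_comp sref_comp_Sn dest: bruhat_le_len)
next
  assume "descent i u"
  moreover have "sref i \<circ> u \<noteq> u"
    using calculation descent_sref_comp[OF assms] by auto
  ultimately show "bruhat_lt n (sref i \<circ> u) u"
    using sref_comp_bruhat_le[OF assms] by (simp add: bruhat_lt_def)
qed

end

text \<open>\<open>sref_min i z\<close> is the smaller of \<open>z\<close> and \<open>s\<^sub>i z\<close>; its monotonicity is the lifting property
  of the Bruhat order.\<close>
definition sref_min :: "nat \<Rightarrow> (nat \<Rightarrow> nat) \<Rightarrow> (nat \<Rightarrow> nat)" where
  "sref_min i z = (if descent i z then sref i \<circ> z else z)"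

lemma transpose_creates_descent:
  fixes X :: "nat \<Rightarrow> nat"
  assumes "j < k" "X j < X k" "\<not> X (Suc i) < X i" "X (transpose j k (Suc i)) < X (transpose j k i)"
  shows "(j, k) = (i, Suc i) \<or> (j = i \<and> Suc i < k) \<or> (j < i \<and> k = Suc i)"
  using assms by (auto simp: transpose_def split: if_splits)

context
  fixes n i :: nat
  assumes i: "1 \<le> i" "Suc i \<le> n"
begin

lemma sref_min_Sn: "z \<in> Sn n \<Longrightarrow> sref_min i z \<in> Sn n"
  by (simp add: sref_min_def sref_comp_Sn[OF i])

lemma sref_min_le_transpose_descent:
  assumes z: "z \<in> Sn n" and jk: "1 \<le> j" "j < k" "k \<le> n" "inv z j < inv z k" and d: "descent i z"
  shows "bruhat_le n (sref_min i z) (sref_min i (transpose j k \<circ> z))"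
proof (cases "descent i (transpose j k \<circ> z)")
  case True
  then have "(j, k) \<noteq> (i, Suc i)"
    using d descent_sref_comp[OF i z] by (auto simp: sref_def)
  then have jk': "1 \<le> sref i j" "sref i j < sref i k" "sref i k \<le> n"
    using jk i by (auto simp: sref_def transpose_def)
  have "inv (sref i \<circ> z) (sref i j) < inv (sref i \<circ> z) (sref i k)"
    using jk by (simp add: inv_sref_comp[OF i z])
  then have "bruhat_le n (sref i \<circ> z) (transpose (sref i j) (sref i k) \<circ> (sref i \<circ> z))"
    using bruhat_le_transpose[OF sref_comp_Sn[OF i z] jk'] by blast
  then show ?thesis
    using True d by (simp add: sref_min_def sref_comp_transpose o_assoc)
next
  case False
  then show ?thesis
    using d bruhat_le_trans[OF sref_comp_bruhat_le[OF i z d] bruhat_le_transpose[OF z jk]]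
    by (simp add: sref_min_def)
qed

lemma sref_min_le_transpose_ascent:
  assumes z: "z \<in> Sn n" and jk: "1 \<le> j" "j < k" "k \<le> n" "inv z j < inv z k" and a: "\<not> descent i z"
  shows "bruhat_le n (sref_min i z) (sref_min i (transpose j k \<circ> z))"
proof (cases "descent i (transpose j k \<circ> z)")
  case True
  let ?sz = "sref i \<circ> z"
  have "(j, k) = (i, Suc i) \<or> (j = i \<and> Suc i < k) \<or> (j < i \<and> k = Suc i)"
    using True a jk by (intro transpose_creates_descent[of j k "inv z"])
      (simp_all add: descent_def inv_transpose_comp Sn_bij[OF z])
  then have "bruhat_le n z (sref i \<circ> (transpose j k \<circ> z))"
  proof (elim disjE conjE)
    assume "(j, k) = (i, Suc i)"
    then show ?thesis
      using bruhat_le_refl[OF z] by (simp flip: sref_def)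
  next
    assume ik: "j = i" "Suc i < k"
    have "bruhat_le n ?sz (transpose (Suc i) k \<circ> ?sz)"
      using ik jk by (intro bruhat_le_transpose sref_comp_Sn[OF i z]) (simp_all add: inv_sref_comp_apply[OF i z], simp_all add: sref_def)
    then show ?thesis
      using bruhat_le_trans[OF bruhat_le_sref_comp[OF i z a]] ik
      by (simp add: sref_comp_transpose o_assoc) (simp add: sref_def)
  next
    assume ik: "j < i" "k = Suc i"
    have "bruhat_le n ?sz (transpose j i \<circ> ?sz)"
      using ik jk by (intro bruhat_le_transpose sref_comp_Sn[OF i z]) (simp_all add: inv_sref_comp_apply[OF i z], simp_all add: sref_def)
    then show ?thesis
      using bruhat_le_trans[OF bruhat_le_sref_comp[OF i z a]] ik
      by (simp add: sref_comp_transpose o_assoc) (simp add: sref_def)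
  qed
  then show ?thesis
    using True a by (simp add: sref_min_def)
next
  case False
  then show ?thesis
    using a bruhat_le_transpose[OF z jk] by (simp add: sref_min_def)
qed

lemma sref_min_mono:
  assumes "bruhat_le n x y"
  shows "bruhat_le n (sref_min i x) (sref_min i y)"
proof -
  have x: "x \<in> Sn n" and "(bruhat_step n)\<^sup>*\<^sup>* x y"
    using assms by (auto simp: bruhat_le_def)
  from this(2) show ?thesis
  proof (induction rule: rtranclp_induct)
    case base
    then show ?case
      using bruhat_le_refl sref_min_Sn x by blast
  next
    case (step y z)
    have y: "y \<in> Sn n"
      using rtranclp_bruhat_step_Sn step.hyps(1) x by blast
    obtain j k where jk: "1 \<le> j" "j < k" "k \<le> n" "z = transpose j k \<circ> y" "inv y j < inv y k"
      using bruhat_stepE[OF y step.hyps(2)] by blast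
    then have "bruhat_le n (sref_min i y) (sref_min i z)"
      using sref_min_le_transpose_descent[OF y] sref_min_le_transpose_ascent[OF y] by blast
    then show ?case
      using step.IH x bruhat_le_trans by blast
  qed
qed

lemma sref_min_sref_comp_le:
  assumes "u \<in> Sn n"
  shows "bruhat_le n (sref_min i (sref i \<circ> u)) u"
  using assms bruhat_le_refl[OF assms] bruhat_le_sref_comp[OF i, of "sref i \<circ> u"]
  by (auto simp: sref_min_def sref_comp_Sn[OF i])

lemma bruhat_le_lift_descent:
  assumes "descent i v" "u \<in> Sn n" "bruhat_le n v (sref i \<circ> u)"
  shows "bruhat_le n (sref i \<circ> v) u"
  using bruhat_le_trans[OF sref_min_mono[OF assms(3)] sref_min_sref_comp_le[OF assms(2)]] assms(1)
  by (simp add: sref_min_def)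

lemma bruhat_le_lift_ascent:
  assumes "\<not> descent i v" "u \<in> Sn n" "bruhat_le n v (sref i \<circ> u)"
  shows "bruhat_le n v u"
  using bruhat_le_trans[OF sref_min_mono[OF assms(3)] sref_min_sref_comp_le[OF assms(2)]] assms(1)
  by (simp add: sref_min_def)

end

section \<open>GKM classes and divided differences\<close>

lemma gkm_onI:
  assumes "\<And>u. u \<notin> U \<Longrightarrow> p u = 0" "\<And>u. u \<in> U \<Longrightarrow> p u \<in> polys n"
    and "\<And>u j k. u \<in> U \<Longrightarrow> 1 \<le> j \<Longrightarrow> j < k \<Longrightarrow> k \<le> n \<Longrightarrow> transpose j k \<circ> u \<in> U \<Longrightarrow>
           (var j - var k) dvd (p u - p (transpose j k \<circ> u))"
  shows "p \<in> gkm_on n U"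
  using assms by (auto simp: gkm_on_def)

lemma gkm_on_zero_outside: "p \<in> gkm_on n U \<Longrightarrow> u \<notin> U \<Longrightarrow> p u = 0"
  by (simp add: gkm_on_def)

lemma gkm_on_polys: "p \<in> gkm_on n U \<Longrightarrow> p u \<in> polys n"
  by (cases "u \<in> U") (auto simp: gkm_on_def polys_zero)

lemma gkm_on_dvd:
  "p \<in> gkm_on n U \<Longrightarrow> u \<in> U \<Longrightarrow> 1 \<le> j \<Longrightarrow> j < k \<Longrightarrow> k \<le> n \<Longrightarrow> transpose j k \<circ> u \<in> U \<Longrightarrow>
    (var j - var k) dvd (p u - p (transpose j k \<circ> u))"
  by (simp add: gkm_on_def)

lemma gkm_on_add:
  assumes "p \<in> gkm_on n U" "q \<in> gkm_on n U"
  shows "(\<lambda>u. p u + q u) \<in> gkm_on n U"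
proof (rule gkm_onI)
  fix u j k
  assume "u \<in> U" "1 \<le> j" "j < k" "k \<le> n" "transpose j k \<circ> u \<in> U"
  then have "(var j - var k) dvd (p u - p (transpose j k \<circ> u)) + (q u - q (transpose j k \<circ> u))"
    using assms by (intro dvd_add gkm_on_dvd)
  then show "(var j - var k) dvd (p u + q u - (p (transpose j k \<circ> u) + q (transpose j k \<circ> u)))"
    by (simp add: add_diff_add)
qed (use assms in \<open>auto simp: gkm_on_zero_outside gkm_on_polys polys_add\<close>)

lemma gkm_on_zero: "(\<lambda>u. 0) \<in> gkm_on n U"
  by (simp add: gkm_on_def polys_zero)

lemma gkm_on_sum: "(\<And>v. v \<in> A \<Longrightarrow> p v \<in> gkm_on n U) \<Longrightarrow> (\<lambda>u. \<Sum>v\<in>A. p v u) \<in> gkm_on n U"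
  by (induction A rule: infinite_finite_induct) (simp_all add: gkm_on_zero gkm_on_add)

lemma gkm_on_diff:
  assumes "p \<in> gkm_on n U" "q \<in> gkm_on n U"
  shows "(\<lambda>u. p u - q u) \<in> gkm_on n U"
proof (rule gkm_onI)
  fix u j k
  assume "u \<in> U" "1 \<le> j" "j < k" "k \<le> n" "transpose j k \<circ> u \<in> U"
  then have "(var j - var k) dvd (p u - p (transpose j k \<circ> u)) - (q u - q (transpose j k \<circ> u))"
    using assms by (intro dvd_diff gkm_on_dvd)
  then show "(var j - var k) dvd (p u - q u - (p (transpose j k \<circ> u) - q (transpose j k \<circ> u)))"
    by (simp add: algebra_simps)
qed (use assms in \<open>auto simp: gkm_on_zero_outside gkm_on_polys polys_diff\<close>)

lemma gkm_on_mult_left: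
  assumes "p \<in> gkm_on n U" "c \<in> polys n"
  shows "(\<lambda>u. c * p u) \<in> gkm_on n U"
proof (rule gkm_onI)
  fix u j k
  assume "u \<in> U" "1 \<le> j" "j < k" "k \<le> n" "transpose j k \<circ> u \<in> U"
  then have "(var j - var k) dvd c * (p u - p (transpose j k \<circ> u))"
    using assms by (intro dvd_mult gkm_on_dvd)
  then show "(var j - var k) dvd (c * p u - c * p (transpose j k \<circ> u))"
    by (simp add: right_diff_distrib)
qed (use assms in \<open>auto simp: gkm_on_zero_outside gkm_on_polys polys_mult\<close>)

lemma gkm_on_restrict:
  assumes "p \<in> gkm_on n U" "V \<subseteq> U"
  shows "(\<lambda>u. if u \<in> V then p u else 0) \<in> gkm_on n V"
proof (rule gkm_onI)
  fix u j k
  assume "u \<in> V" "1 \<le> j" "j < k" "k \<le> n" "transpose j k \<circ> u \<in> V"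
  then show "(var j - var k) dvd
      (if u \<in> V then p u else 0) - (if transpose j k \<circ> u \<in> V then p (transpose j k \<circ> u) else 0)"
    using assms gkm_on_dvd[OF assms(1), of u j k] by auto
qed (use assms in \<open>auto simp: gkm_on_polys\<close>)

lemma iota_HGB: "p \<in> HGB n \<Longrightarrow> iota n w p \<in> HX n w"
  unfolding HGB_def HX_def iota_def
  by (drule gkm_on_restrict[of _ _ _ "{u. bruhat_le n u w}"]) (auto simp: bruhat_le_def)

lemma HGB_dvd:
  assumes "p \<in> HGB n" "u \<in> Sn n" "1 \<le> j" "j < k" "k \<le> n"
  shows "(var j - var k) dvd (p u - p (transpose j k \<circ> u))"
  using assms transpose_comp_Sn[of j n k u] unfolding HGB_def by (intro gkm_on_dvd) auto

lemma divq_eq: "(var i - var (Suc i)) * r = g \<Longrightarrow> divq i g = r"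
  unfolding divq_def by (rule the_equality) (auto simp: var_eq_iff)

lemma mult_divq: "(var i - var (Suc i)) dvd g \<Longrightarrow> (var i - var (Suc i)) * divq i g = g"
  by (metis dvdE divq_eq)

lemma dvd_diff_perm_poly_sref: "(var i - var (Suc i)) dvd (f - perm_poly (sref i) f)"
proof (rule perm_sref.dvd_diff_hom)
  fix j
  have "var j - var (sref i j) \<in> {0, var i - var (Suc i), - (var i - var (Suc i))}"
    by (auto simp: sref_def transpose_def)
  then show "(var i - var (Suc i)) dvd (var j - perm_poly (sref i) (var j))"
    by (auto simp: perm_poly_sref_var) (metis dvd_minus_iff dvd_refl minus_diff_eq)
qed

lemma mult_dd: "(var i - var (Suc i)) * dd i f = f - perm_poly (sref i) f"
  unfolding dd_def by (rule mult_divq[OF dvd_diff_perm_poly_sref])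

lemma act_sref: "act (sref i) p u = perm_poly (sref i) (p (sref i \<circ> u))"
  by (simp add: act_def sref_def)

lemma Dop_eq_0: "p u = 0 \<Longrightarrow> p (sref i \<circ> u) = 0 \<Longrightarrow> Dop i p u = 0"
  using divq_eq[of i 0 0] by (simp add: Dop_def act_sref perm_sref.hom_zero)

context
  fixes n i :: nat
  assumes i: "1 \<le> i" "Suc i \<le> n"
begin

lemma dvd_Dop_numerator:
  assumes p: "p \<in> HGB n"
  shows "(var i - var (Suc i)) dvd (p u - act (sref i) p u)"
proof (cases "u \<in> Sn n")
  case False
  then show ?thesis
    using p sref_comp_Sn_iff[OF i] by (simp add: act_sref HGB_def gkm_on_zero_outside perm_sref.hom_zero)
next
  case True
  have "(var i - var (Suc i)) dvd (p u - p (sref i \<circ> u))"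
    using HGB_dvd[OF p True, of i "Suc i"] i by (simp add: sref_def)
  then have "(var i - var (Suc i)) dvd
      (p u - p (sref i \<circ> u)) + (p (sref i \<circ> u) - perm_poly (sref i) (p (sref i \<circ> u)))"
    by (intro dvd_add dvd_diff_perm_poly_sref)
  then show ?thesis
    by (simp add: act_sref)
qed

lemma mult_Dop: "p \<in> HGB n \<Longrightarrow> (var i - var (Suc i)) * Dop i p u = p u - act (sref i) p u"
  unfolding Dop_def by (rule mult_divq[OF dvd_Dop_numerator])

lemma perm_poly_sref_Dop:
  assumes p: "p \<in> HGB n"
  shows "perm_poly (sref i) (Dop i p u) = Dop i p (sref i \<circ> u)"
proof -
  let ?a = "var i - var (Suc i)"
  have "?a * perm_poly (sref i) (Dop i p u) = - perm_poly (sref i) (?a * Dop i p u)"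
    by (simp add: perm_sref.hom_mult perm_sref.hom_diff perm_poly_sref_var) (simp add: sref_def algebra_simps)
  also have "\<dots> = ?a * Dop i p (sref i \<circ> u)"
    by (simp add: mult_Dop[OF p] act_sref perm_sref.hom_diff perm_poly_sref_sref)
  finally show ?thesis
    by (simp add: var_eq_iff)
qed

lemma Dop_dvd_transpose:
  assumes p: "p \<in> HGB n" and u: "u \<in> Sn n" and jk: "1 \<le> j" "j < k" "k \<le> n" "(j, k) \<noteq> (i, Suc i)"
  shows "(var j - var k) dvd (Dop i p u - Dop i p (transpose j k \<circ> u))"
proof -
  let ?s = "sref i" and ?t = "transpose j k"
  have sjk: "1 \<le> ?s j" "?s j < ?s k" "?s k \<le> n"
    using jk i by (auto simp: sref_def transpose_def)
  have "?s \<circ> (?t \<circ> u) = transpose (?s j) (?s k) \<circ> (?s \<circ> u)"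
    by (simp add: sref_comp_transpose o_assoc)
  then have "(var (?s j) - var (?s k)) dvd (p (?s \<circ> u) - p (?s \<circ> (?t \<circ> u)))"
    using HGB_dvd[OF p sref_comp_Sn[OF i u] sjk] by simp
  then have "perm_poly ?s (var (?s j) - var (?s k)) dvd perm_poly ?s (p (?s \<circ> u) - p (?s \<circ> (?t \<circ> u)))"
    by (rule perm_sref.hom_dvd)
  then have "(var j - var k) dvd (p u - p (?t \<circ> u)) - perm_poly ?s (p (?s \<circ> u) - p (?s \<circ> (?t \<circ> u)))"
    using HGB_dvd[OF p u jk(1-3)] by (simp add: perm_sref.hom_diff perm_poly_sref_var dvd_diff)
  also have "\<dots> = (var i - var (Suc i)) * (Dop i p u - Dop i p (?t \<circ> u))"
    by (simp add: right_diff_distrib mult_Dop[OF p] act_sref perm_sref.hom_diff)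
  finally have "(var j - var k) dvd (var i - var (Suc i)) * (Dop i p u - Dop i p (?t \<circ> u))" .
  moreover have "rename_vars (id(j := k)) (var i - var (Suc i)) \<noteq> 0"
    using jk by (intro rename_vars_var_diff_nonzero) auto
  ultimately show ?thesis
    by (rule var_diff_dvd_mult_cancel[rotated]) (use jk(2) in simp)
qed

lemma Dop_HGB:
  assumes p: "p \<in> HGB n"
  shows "Dop i p \<in> HGB n"
  unfolding HGB_def
proof (rule gkm_onI)
  fix u
  assume "u \<notin> Sn n"
  then show "Dop i p u = 0"
    using p sref_comp_Sn_iff[OF i] by (intro Dop_eq_0) (auto simp: HGB_def gkm_on_zero_outside)
next
  fix u
  have "p u - act (sref i) p u \<in> polys n"
    using p sref_permutes[OF i]
    by (auto simp: act_sref HGB_def gkm_on_polys intro!: polys_diff perm_poly_polys)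
  then have "(var i - var (Suc i)) * Dop i p u \<in> polys n"
    by (simp add: mult_Dop[OF p])
  moreover have "var i - var (Suc i) \<in> polys n"
    using i by (simp add: polys_diff polys_var)
  ultimately show "Dop i p u \<in> polys n"
    by (rule polys_mult_cancel[rotated 2]) (simp add: var_eq_iff)
next
  fix u j k
  assume u: "u \<in> Sn n" and jk: "1 \<le> j" "j < k" "k \<le> n"
  show "(var j - var k) dvd (Dop i p u - Dop i p (transpose j k \<circ> u))"
  proof (cases "(j, k) = (i, Suc i)")
    case True
    then show ?thesis
      using dvd_diff_perm_poly_sref[of i "Dop i p u"] by (simp add: perm_poly_sref_Dop[OF p] flip: sref_def)
  next
    case False
    then show ?thesis
      using Dop_dvd_transpose[OF p u jk] by blast
  qed
qed

lemma Dop_homogeneous: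
  assumes p: "p \<in> HGB n" and hom: "\<And>u. homogeneous d (p u)" and nz: "Dop i p u \<noteq> 0"
  shows "homogeneous (d - 1) (Dop i p u) \<and> 1 \<le> d"
proof -
  have "homogeneous d ((var i - var (Suc i)) * Dop i p u)"
    unfolding mult_Dop[OF p] act_sref
    by (intro homogeneous_diff homogeneous_perm_poly hom) (simp add: sref_def)
  then show ?thesis
    using homogeneous_mult_cancel[OF homogeneous_var_diff[of i "Suc i"] var_diff_nonzero _ nz] by simp
qed

end

section \<open>Schubert classes\<close>

lemma homogeneous_prod_Inv: "homogeneous (len n v) (\<Prod>\<beta>\<in>Inv n v. \<beta>)"
proof -
  have "homogeneous (\<Sum>p\<in>inversion_pairs n (inv v). 1) (\<Prod>(a, b)\<in>inversion_pairs n (inv v). var a - var b)"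
    by (rule homogeneous_prod) (auto simp: homogeneous_var_diff[simplified])
  then show ?thesis
    by (simp add: prod_Inv len_eq_card_inversion_pairs)
qed

lemma prod_Inv_nonzero: "(\<Prod>\<beta>\<in>Inv n v. \<beta>) \<noteq> 0"
  by (simp add: prod_Inv prod_zero_iff finite_inversion_pairs) (auto simp: inversion_pairs_def var_eq_iff)

lemma prod_Inv_polys: "(\<Prod>\<beta>\<in>Inv n v. \<beta>) \<in> polys n"
  unfolding prod_Inv by (intro polys_prod) (auto simp: inversion_pairs_def intro!: polys_diff polys_var)

lemma len_le_square: "len n v \<le> n * n"
proof -
  have "card (inversion_pairs n (inv v)) \<le> card ({1..n} \<times> {1..n})"
    by (intro card_mono) (auto simp: inversion_pairs_def)
  then show ?thesis
    by (simp add: len_eq_card_inversion_pairs)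
qed

lemma HGB_prod_Inv_dvd:
  assumes q: "q \<in> HGB n" and u: "u \<in> Sn n" and shorter: "\<And>u'. len n u' < len n u \<Longrightarrow> q u' = 0"
  shows "(\<Prod>\<beta>\<in>Inv n u. \<beta>) dvd q u"
proof -
  have "(var a - var b) dvd q u" if "(a, b) \<in> inversion_pairs n (inv u)" for a b
  proof -
    have ab: "1 \<le> a" "a < b" "b \<le> n" "inv u b < inv u a"
      using that by (auto simp: inversion_pairs_def)
    then have "q (transpose a b \<circ> u) = 0"
      using shorter len_transpose_greater[OF u ab] by blast
    then show ?thesis
      using HGB_dvd[OF q u ab(1-3)] by simp
  qed
  then show ?thesis
    unfolding prod_Inv
    by (intro prod_var_diff_dvd finite_inversion_pairs) (auto simp: inversion_pairs_def)
qed

text \<open>At a shortest \<open>u\<close> with \<open>q u \<noteq> 0\<close>, the GKM conditions make \<open>q u\<close> divisible by the product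
  over \<open>Inv n u\<close>, whose degree is the length of \<open>u\<close>.\<close>
lemma HGB_eq_0_of_degree_less_len:
  assumes q: "q \<in> HGB n" and deg: "\<And>u. q u \<noteq> 0 \<Longrightarrow> \<exists>d. homogeneous d (q u) \<and> d < len n u"
  shows "q u = 0"
proof (induction "len n u" arbitrary: u rule: less_induct)
  case less
  show ?case
  proof (rule ccontr)
    assume nz: "q u \<noteq> 0"
    then have "u \<in> Sn n"
      using q gkm_on_zero_outside[of q n "Sn n" u] by (auto simp: HGB_def)
    then obtain r where r: "q u = (\<Prod>\<beta>\<in>Inv n u. \<beta>) * r"
      using HGB_prod_Inv_dvd[OF q _ less] by (meson dvdE)
    obtain d where d: "homogeneous d (q u)" "d < len n u"
      using deg[OF nz] by blast
    then have "len n u \<le> d"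
      using homogeneous_mult_cancel[OF homogeneous_prod_Inv prod_Inv_nonzero, where d = d and r = r] r nz by auto
    then show False
      using d(2) by simp
  qed
qed

definition is_schubert_class :: "nat \<Rightarrow> (nat \<Rightarrow> nat) \<Rightarrow> ((nat \<Rightarrow> nat) \<Rightarrow> cpoly) \<Rightarrow> bool" where
  "is_schubert_class n v p \<longleftrightarrow> p \<in> HGB n \<and> (\<forall>u. \<not> bruhat_le n v u \<longrightarrow> p u = 0) \<and>
     (\<forall>u. homogeneous (len n v) (p u)) \<and> p v = (\<Prod>\<beta>\<in>Inv n v. \<beta>)"

lemma is_schubert_class_unique:
  assumes p: "is_schubert_class n v p" and q: "is_schubert_class n v q"
  shows "p = q"
proof
  fix u
  have "(\<lambda>u. p u - q u) \<in> HGB n"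
    using p q unfolding is_schubert_class_def HGB_def by (intro gkm_on_diff) auto
  then have "p u - q u = 0"
  proof (rule HGB_eq_0_of_degree_less_len[where q = "\<lambda>u. p u - q u"])
    fix u
    assume nz: "p u - q u \<noteq> 0"
    then have "bruhat_le n v u" "v \<noteq> u"
      using p q by (auto simp: is_schubert_class_def) (metis diff_self)
    then have "len n v < len n u"
      by (rule bruhat_le_len_less)
    moreover have "homogeneous (len n v) (p u - q u)"
      using p q by (intro homogeneous_diff) (auto simp: is_schubert_class_def)
    ultimately show "\<exists>d. homogeneous d (p u - q u) \<and> d < len n u"
      by blast
  qed
  then show "p u = q u"
    by simp
qed

lemma schubert_eqI:
  assumes "is_schubert_class n v p"
  shows "schubert n v = p"
proof -
  have "(\<forall>u. p u \<noteq> 0 \<longrightarrow> homogeneous d (p u)) \<longleftrightarrow> (\<forall>u. homogeneous d (p u))" for d and p :: "(nat \<Rightarrow> nat) \<Rightarrow> cpoly"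
    by (metis homogeneous_zero)
  then have "schubert n v = (THE p. is_schubert_class n v p)"
    by (simp add: schubert_def is_schubert_class_def)
  also have "\<dots> = p"
    using assms is_schubert_class_unique by blast
  finally show ?thesis .
qed

context
  fixes n i :: nat
  assumes i: "1 \<le> i" "Suc i \<le> n"
begin

lemma Dop_at_sref_comp:
  assumes sch: "is_schubert_class n v p" and v: "v \<in> Sn n" and d: "descent i v"
  shows "Dop i p (sref i \<circ> v) = (\<Prod>\<beta>\<in>Inv n (sref i \<circ> v). \<beta>)"
proof -
  have "\<not> bruhat_le n v (sref i \<circ> v)"
    using bruhat_le_len len_sref_comp[OF i v d] by fastforce
  then have "p (sref i \<circ> v) = 0"
    using sch by (simp add: is_schubert_class_def)
  then have "p (sref i \<circ> v) - act (sref i) p (sref i \<circ> v) =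
      (var i - var (Suc i)) * (\<Prod>\<beta>\<in>Inv n (sref i \<circ> v). \<beta>)"
    using sch prod_Inv_sref_comp[OF i v d] by (simp add: act_sref is_schubert_class_def algebra_simps)
  then show ?thesis
    unfolding Dop_def by (intro divq_eq) simp
qed

lemma Dop_is_schubert_class:
  assumes sch: "is_schubert_class n v p" and v: "v \<in> Sn n" and d: "descent i v"
  shows "is_schubert_class n (sref i \<circ> v) (Dop i p)"
proof -
  have p: "p \<in> HGB n"
    using sch by (simp add: is_schubert_class_def)
  have supp: "Dop i p u = 0" if "\<not> bruhat_le n (sref i \<circ> v) u" for u
  proof (rule Dop_eq_0)
    show "p u = 0"
      using that sch bruhat_le_trans[OF sref_comp_bruhat_le[OF i v d]] by (auto simp: is_schubert_class_def)
    show "p (sref i \<circ> u) = 0"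
      using that sch bruhat_le_lift_descent[OF i d] sref_comp_Sn_iff[OF i]
      by (auto simp: is_schubert_class_def bruhat_le_def)
  qed
  have len: "len n (sref i \<circ> v) = len n v - 1"
    using len_sref_comp[OF i v d] by simp
  have "homogeneous (len n (sref i \<circ> v)) (Dop i p u)" for u
    using Dop_homogeneous[OF i p, of "len n v" u] sch
    by (cases "Dop i p u = 0") (auto simp: is_schubert_class_def len)
  then show ?thesis
    using Dop_HGB[OF i p] supp Dop_at_sref_comp[OF sch v d] by (simp add: is_schubert_class_def)
qed

lemma Dop_eq_0_of_ascent:
  assumes sch: "is_schubert_class n v p" and a: "\<not> descent i v"
  shows "Dop i p u = 0"
proof (rule HGB_eq_0_of_degree_less_len[where q = "Dop i p"])
  have p: "p \<in> HGB n"
    using sch by (simp add: is_schubert_class_def)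
  then show "Dop i p \<in> HGB n"
    by (rule Dop_HGB[OF i])
  fix u
  assume nz: "Dop i p u \<noteq> 0"
  then have "u \<in> Sn n"
    using Dop_HGB[OF i p] gkm_on_zero_outside[of "Dop i p" n "Sn n" u] by (auto simp: HGB_def)
  moreover have "bruhat_le n v u \<or> bruhat_le n v (sref i \<circ> u)"
  proof (rule ccontr)
    assume "\<not> (bruhat_le n v u \<or> bruhat_le n v (sref i \<circ> u))"
    then have "p u = 0" "p (sref i \<circ> u) = 0"
      using sch by (auto simp: is_schubert_class_def)
    then show False
      using nz Dop_eq_0 by blast
  qed
  ultimately have "bruhat_le n v u"
    using bruhat_le_lift_ascent[OF i a] by blast
  then have "len n v \<le> len n u"
    by (rule bruhat_le_len)
  moreover have "homogeneous (len n v - 1) (Dop i p u) \<and> 1 \<le> len n v"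
    using Dop_homogeneous[OF i p _ nz] sch by (simp add: is_schubert_class_def)
  ultimately show "\<exists>d. homogeneous d (Dop i p u) \<and> d < len n u"
    by (intro exI[of _ "len n v - 1"]) auto
qed

end

lemma inv_decreasing_of_all_descents:
  assumes "\<And>j. 1 \<le> j \<Longrightarrow> Suc j \<le> n \<Longrightarrow> descent j v" "1 \<le> a" "a < b" "b \<le> n"
  shows "inv v b < inv v a"
  using assms(3,4)
proof (induction b)
  case (Suc b)
  then have "inv v (Suc b) < inv v b"
    using assms(1,2) by (simp add: descent_def)
  then show ?case
    using Suc by (cases "a = b") auto
qed simp

text \<open>Only the longest permutation has every \<open>s\<^sub>i\<close> as a descent.\<close>
lemma is_schubert_class_of_all_descents:
  assumes v: "v \<in> Sn n" and desc: "\<And>j. 1 \<le> j \<Longrightarrow> Suc j \<le> n \<Longrightarrow> descent j v"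
  shows "is_schubert_class n v (\<lambda>u. if u = v then \<Prod>\<beta>\<in>Inv n v. \<beta> else 0)"
proof -
  have "(var j - var k) dvd (\<Prod>\<beta>\<in>Inv n v. \<beta>)" if "1 \<le> j" "j < k" "k \<le> n" for j k
  proof -
    have "(j, k) \<in> inversion_pairs n (inv v)"
      using that inv_decreasing_of_all_descents[OF desc] by (simp add: inversion_pairs_def)
    then show ?thesis
      unfolding prod_Inv using dvd_prodI[OF finite_inversion_pairs, of _ _ _ "\<lambda>(a, b). var a - var b"]
      by fastforce
  qed
  moreover have "transpose j k \<circ> u \<noteq> u" if "j \<noteq> k" "u \<in> Sn n" for j k u
    using that bij_inv_eq_iff[OF Sn_bij] by (metis comp_apply transpose_apply_first)
  ultimately have "(\<lambda>u. if u = v then \<Prod>\<beta>\<in>Inv n v. \<beta> else 0) \<in> HGB n"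
    unfolding HGB_def using v by (intro gkm_onI) (auto simp: prod_Inv_polys polys_zero)
  then show ?thesis
    using bruhat_le_refl[OF v] homogeneous_prod_Inv by (auto simp: is_schubert_class_def)
qed

lemma is_schubert_class_schubert:
  assumes "v \<in> Sn n"
  shows "is_schubert_class n v (schubert n v)"
proof -
  have "\<exists>p. is_schubert_class n v p"
    using assms
  proof (induction "n * n - len n v" arbitrary: v rule: less_induct)
    case less
    show ?case
    proof (cases "\<forall>j. 1 \<le> j \<and> Suc j \<le> n \<longrightarrow> descent j v")
      case True
      then show ?thesis
        using is_schubert_class_of_all_descents[OF less.prems] by blast
    next
      case False
      then obtain j where j: "1 \<le> j" "Suc j \<le> n" "\<not> descent j v"
        by blast
      let ?v = "sref j \<circ> v"
      have v': "?v \<in> Sn n" "descent j ?v"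
        using j less.prems by (simp_all add: sref_comp_Sn descent_sref_comp)
      then have "n * n - len n ?v < n * n - len n v"
        using len_sref_comp[OF j(1,2) v'] len_le_square[of n ?v] by simp
      then obtain p where "is_schubert_class n ?v p"
        using less.hyps v'(1) by blast
      then show ?thesis
        using Dop_is_schubert_class[OF j(1,2) _ v'] by auto
    qed
  qed
  then show ?thesis
    using schubert_eqI by blast
qed

lemma Dop_schubert:
  assumes "1 \<le> i" "Suc i \<le> n" "v \<in> Sn n"
  shows "Dop i (schubert n v) = (if descent i v then schubert n (sref i \<circ> v) else (\<lambda>u. 0))"
  using assms is_schubert_class_schubert[OF assms(3)]
  by (auto intro!: schubert_eqI[symmetric] Dop_is_schubert_class Dop_eq_0_of_ascent)

context
  fixes n i :: nat
  assumes i: "1 \<le> i" "Suc i \<le> n"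
begin

lemma Dop_sum:
  assumes "finite A" "\<And>v. v \<in> A \<Longrightarrow> p v \<in> HGB n"
  shows "Dop i (\<lambda>u. \<Sum>v\<in>A. p v u) u = (\<Sum>v\<in>A. Dop i (p v) u)"
proof -
  have "(\<lambda>u. \<Sum>v\<in>A. p v u) \<in> HGB n"
    using assms(2) unfolding HGB_def by (rule gkm_on_sum)
  then have "(var i - var (Suc i)) * Dop i (\<lambda>u. \<Sum>v\<in>A. p v u) u =
      (\<Sum>v\<in>A. p v u - perm_poly (sref i) (p v (sref i \<circ> u)))"
    by (simp add: mult_Dop[OF i] act_sref perm_sref.hom_sum sum_subtractf)
  also have "\<dots> = (var i - var (Suc i)) * (\<Sum>v\<in>A. Dop i (p v) u)"
    using assms(2) by (simp add: sum_distrib_left mult_Dop[OF i] act_sref)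
  finally show ?thesis
    by (simp add: var_eq_iff)
qed

lemma Dop_mult_left:
  assumes p: "p \<in> HGB n" and c: "c \<in> polys n"
  shows "Dop i (\<lambda>u. c * p u) u = dd i c * p u + perm_poly (sref i) c * Dop i p u"
proof -
  have "(\<lambda>u. c * p u) \<in> HGB n"
    using p c unfolding HGB_def by (rule gkm_on_mult_left)
  then have "(var i - var (Suc i)) * Dop i (\<lambda>u. c * p u) u =
      c * p u - perm_poly (sref i) c * perm_poly (sref i) (p (sref i \<circ> u))"
    by (simp add: mult_Dop[OF i] act_sref perm_sref.hom_mult)
  also have "\<dots> = (c - perm_poly (sref i) c) * p u + perm_poly (sref i) c * (p u - act (sref i) p u)"
    by (simp add: act_sref algebra_simps)
  also have "\<dots> = (var i - var (Suc i)) * (dd i c * p u + perm_poly (sref i) c * Dop i p u)"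
    by (simp only: mult_dd[symmetric] mult_Dop[OF i p, symmetric]) (simp add: algebra_simps)
  finally show ?thesis
    by (simp add: var_eq_iff)
qed

lemma Dop_schubert_expansion:
  assumes B: "finite B" "B \<subseteq> Sn n" and c: "\<And>v. v \<in> B \<Longrightarrow> c v \<in> polys n"
  shows "Dop i (\<lambda>u. \<Sum>v\<in>B. c v * schubert n v u) u =
    (\<Sum>v\<in>B. dd i (c v) * schubert n v u) +
    (\<Sum>v\<in>{v \<in> B. descent i v}. perm_poly (sref i) (c v) * schubert n (sref i \<circ> v) u)"
proof -
  have sch: "schubert n v \<in> HGB n" if "v \<in> B" for v
    using that B is_schubert_class_schubert by (auto simp: is_schubert_class_def)
  have "Dop i (\<lambda>u. \<Sum>v\<in>B. c v * schubert n v u) u = (\<Sum>v\<in>B. Dop i (\<lambda>u. c v * schubert n v u) u)"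
    using B sch c by (intro Dop_sum) (auto simp: HGB_def intro: gkm_on_mult_left)
  also have "\<dots> = (\<Sum>v\<in>B. dd i (c v) * schubert n v u +
      (if descent i v then perm_poly (sref i) (c v) * schubert n (sref i \<circ> v) u else 0))"
    using B sch c by (intro sum.cong) (auto simp: Dop_mult_left Dop_schubert[OF i])
  finally show ?thesis
    using B(1) by (simp add: sum.distrib sum.inter_filter)
qed

end

theorem mainTheorem11:
  fixes n i :: nat and w :: "nat \<Rightarrow> nat"
    and p c :: "(nat \<Rightarrow> nat) \<Rightarrow> cpoly"
  assumes "w \<in> Sn n" and "1 \<le> i" and "i \<le> n - 1"
    and "p \<in> HX n w"
    and "\<forall>v. bruhat_le n v w \<longrightarrow> c v \<in> polys n"
    and "p = (\<lambda>u. \<Sum>v\<in>{v. bruhat_le n v w}. c v * schubertX n w v u)"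
  shows "let P = (\<lambda>u. \<Sum>v\<in>{v. bruhat_le n v w}. c v * schubert n v u) in
           (\<forall>u. bruhat_le n u w \<longrightarrow>
              (var i - var (Suc i)) * Dop i P u = P u - act (sref i) P u) \<and>
           iota n w (Dop i P) =
             (\<lambda>u. (\<Sum>v\<in>{v. bruhat_le n v w}. dd i (c v) * schubertX n w v u) +
                  (\<Sum>v\<in>{v. bruhat_le n v w \<and> bruhat_lt n (sref i \<circ> v) v}.
                     perm_poly (sref i) (c v) * schubertX n w (sref i \<circ> v) u)) \<and>
           iota n w (Dop i P) \<in> HX n w"
proof -
  have i: "1 \<le> i" "Suc i \<le> n"
    using assms(2,3) by auto
  define B where "B = {v. bruhat_le n v w}"
  define P where "P = (\<lambda>u. \<Sum>v\<in>B. c v * schubert n v u)"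
  have B: "finite B" "B \<subseteq> Sn n"
    using finite_permutations[of "{1..n}"] by (auto simp: B_def bruhat_le_def Sn_def intro: finite_subset)
  have c: "c v \<in> polys n" if "v \<in> B" for v
    using that assms(5) by (simp add: B_def)
  have P: "P \<in> HGB n"
    unfolding P_def HGB_def using B c is_schubert_class_schubert
    by (intro gkm_on_sum gkm_on_mult_left) (auto simp: is_schubert_class_def HGB_def)
  have "{v. bruhat_le n v w \<and> bruhat_lt n (sref i \<circ> v) v} = {v \<in> B. descent i v}"
    using B bruhat_lt_sref_comp_iff[OF i] by (auto simp: B_def)
  then have "iota n w (Dop i P) =
      (\<lambda>u. (\<Sum>v\<in>B. dd i (c v) * schubertX n w v u) +
        (\<Sum>v\<in>{v. bruhat_le n v w \<and> bruhat_lt n (sref i \<circ> v) v}.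
           perm_poly (sref i) (c v) * schubertX n w (sref i \<circ> v) u))"
    by (auto simp: iota_def schubertX_def P_def Dop_schubert_expansion[OF i B c])
  moreover have "\<forall>u. (var i - var (Suc i)) * Dop i P u = P u - act (sref i) P u"
    using mult_Dop[OF i P] by blast
  moreover have "iota n w (Dop i P) \<in> HX n w"
    by (rule iota_HGB[OF Dop_HGB[OF i P]])
  ultimately show ?thesis
    unfolding Let_def B_def[symmetric] P_def[symmetric] by blast
qed

end
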